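(* Let $V:\mathbb{G}\to\mathbb{R}$ be any real function, $L\ge1$, and $E\in\mathbb{R}$. Let $X^L,Y^L$ be any two operators from the set $\{H^{\mathbb{G}_L,\bullet},\,H^{\widetilde{\mathbb{G}}_L,\bullet}:\bullet\in\{S,N,D\}\}$. Then $$|\mathcal N(E;X^L)-\mathcal N(E;Y^L)|\le 9.$$ Moreover, write $\mathbb{G}_L=\bigcup_{i=1}^3\mathbb{G}_{L-1,i}$ with $\mathbb{G}_{L-1,1}=\mathbb{G}_{L-1}$, $\mathbb{G}_{L-1,2}=\mathbb{G}_{L-1}+2^{L-1}a_2$, $\mathbb{G}_{L-1,3}=\mathbb{G}_{L-1}+2^{L-1}a_3$, and let $\widetilde{\mathbb{G}}_{L-1,i}$ be the corresponding truncated triangles. If $X^L=H^{\mathbb{G}_L,\bullet}$ put $X^{L-1,i}=H^{\mathbb{G}_{L-1,i},\bullet}$, and if $X^L=H^{\widetilde{\mathbb{G}}_L,\bullet}$ put $X^{L-1,i}=H^{\widetilde{\mathbb{G}}_{L-1,i},\bullet}$ (same boundary condition $\bullet$). Then $$\Big|\mathcal N(E;X^L)-\sum_{i=1}^3\mathcal N(E;X^{L-1,i})\Big|\le 30.$$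
   Context: Let $a_1=(0,0)$, $a_2=(1,0)$, $a_3=(1/2,\sqrt3/2)$, $T_0$ the unit equilateral triangle with these vertices, $T_{n+1}=T_n\cup(T_n+2^na_2)\cup(T_n+2^na_3)$. $\mathbb{G}_n$ is the set of vertices of unit triangles (translates of $T_0$) in $T_n$, with $x\sim y$ iff $x\ne y$ lie on a common unit triangle; the Sierpinski lattice is $\mathbb{G}=\bigcup_n(\mathbb{G}_n\cup\mathbb{G}_n')$, $\mathbb{G}_n'$ the mirror image in the $y$-axis; $\deg(x)=4$ denotes the degree of $x$ in $\mathbb{G}$, and for $A\subseteq\mathbb{G}$, $\deg_A(x)=\#\{y\in A:y\sim x\}$. The extreme vertices of $\mathbb{G}_L$ (or of a translate of it) are the three corners of its largest triangle, and the truncated triangle $\widetilde{\mathbb{G}}_L$ is $\mathbb{G}_L$ with its three extreme vertices removed. For finite $A\subseteq\mathbb{G}$ and $f\in\ell^2(A)$ define three Laplacians: simple ($\bullet=S$): $-\Delta^{A,S}f(x)=\deg(x)f(x)-\sum_{y\in A,y\sim x}f(y)$; Neumann ($\bullet=N$): $-\Delta^{A,N}f(x)=\deg_A(x)f(x)-\sum_{y\in A,y\sim x}f(y)$; modified Dirichlet ($\bullet=D$): $-\Delta^{A,D}f(x)=(2\deg(x)-\deg_A(x))f(x)-\sum_{y\in A,y\sim x}f(y)$; and $H^{A,\bullet}=-\Delta^{A,\bullet}+V|_A$ on $\ell^2(A)$ with $V|_A$ the multiplication operator by $V$ restricted to $A$. For a self-adjoint operator $X$ on a finite-dimensional space, $\mathcal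 N(E;X)$ is the number of eigenvalues (with multiplicity) $\le E$. *)

theory Defs
  imports "HOL-Analysis.Analysis" "HOL-Library.Function_Algebras"
begin

type_synonym pt = "real \<times> real"

definition a1 :: pt where "a1 = (0, 0)"
definition a2 :: pt where "a2 = (1, 0)"
definition a3 :: pt where "a3 = (1/2, sqrt 3 / 2)"

text \<open>Lower-left corners of the unit triangles (translates of T_0) contained in T_n.\<close>
fun corners :: "nat \<Rightarrow> pt set" where
  "corners 0 = {a1}"
| "corners (Suc n) = corners n \<union> (\<lambda>c. c + (2::real)^n *\<^sub>R a2) ` corners n
                              \<union> (\<lambda>c. c + (2::real)^n *\<^sub>R a3) ` corners n"

definition tri :: "pt \<Rightarrow> pt set" where
  "tri c = {c + a1, c + a2, c + a3}"

definition mirror :: "pt \<Rightarrow> pt" where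
  "mirror p = (- fst p, snd p)"

definition Gn :: "nat \<Rightarrow> pt set" where
  "Gn n = \<Union> (tri ` corners n)"

definition SG :: "pt set" where
  "SG = (\<Union>n. Gn n \<union> mirror ` Gn n)"

definition unit_tris :: "pt set set" where
  "unit_tris = {tri c | c n. c \<in> corners n} \<union> {mirror ` tri c | c n. c \<in> corners n}"

definition adj :: "pt \<Rightarrow> pt \<Rightarrow> bool" where
  "adj x y \<longleftrightarrow> x \<noteq> y \<and> x \<in> SG \<and> y \<in> SG \<and> (\<exists>t\<in>unit_tris. x \<in> t \<and> y \<in> t)"

definition deg :: "pt \<Rightarrow> nat" where
  "deg x = card {y. adj x y}"

definition degA :: "pt set \<Rightarrow> pt \<Rightarrow> nat" where
  "degA A x = card {y \<in> A. adj x y}"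

definition extreme :: "nat \<Rightarrow> pt set" where
  "extreme L = {a1, (2::real)^L *\<^sub>R a2, (2::real)^L *\<^sub>R a3}"

definition Gtil :: "nat \<Rightarrow> pt set" where
  "Gtil L = Gn L - extreme L"

datatype bc = S | N | D

text \<open>H^{A,bc} = -Laplacian^{A,bc} + V|_A acting on l^2(A), realised on functions vanishing off A.\<close>
definition Hop :: "pt set \<Rightarrow> bc \<Rightarrow> (pt \<Rightarrow> real) \<Rightarrow> (pt \<Rightarrow> real) \<Rightarrow> (pt \<Rightarrow> real)" where
  "Hop A b V f = (\<lambda>x. if x \<in> A then
       (case b of
          S \<Rightarrow> real (deg x)
        | N \<Rightarrow> real (degA A x)
        | D \<Rightarrow> 2 * real (deg x) - real (degA A x)) * f x
       - (\<Sum>y\<in>{y \<in> A. adj y x}. f y) + V x * f x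
     else 0)"

definition l2 :: "pt set \<Rightarrow> (pt \<Rightarrow> real) set" where
  "l2 A = {f. \<forall>x. x \<notin> A \<longrightarrow> f x = 0}"

definition fscale :: "real \<Rightarrow> (pt \<Rightarrow> real) \<Rightarrow> (pt \<Rightarrow> real)" where
  "fscale c f = (\<lambda>x. c * f x)"

definition eigenspace :: "pt set \<Rightarrow> ((pt \<Rightarrow> real) \<Rightarrow> (pt \<Rightarrow> real)) \<Rightarrow> real \<Rightarrow> (pt \<Rightarrow> real) set" where
  "eigenspace A X lam = {f \<in> l2 A. X f = fscale lam f}"

definition is_eigenvalue :: "pt set \<Rightarrow> ((pt \<Rightarrow> real) \<Rightarrow> (pt \<Rightarrow> real)) \<Rightarrow> real \<Rightarrow> bool" where
  "is_eigenvalue A X lam \<longleftrightarrow> (\<exists>f \<in> eigenspace A X lam. f \<noteq> 0)"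

text \<open>Eigenvalue counting function N(E;X) on l^2(A): eigenvalues <= E counted with multiplicity
  (multiplicity = dimension of the eigenspace; X is self-adjoint).\<close>
definition Ncount :: "real \<Rightarrow> pt set \<Rightarrow> ((pt \<Rightarrow> real) \<Rightarrow> (pt \<Rightarrow> real)) \<Rightarrow> nat" where
  "Ncount E A X = (\<Sum>lam\<in>{lam. is_eigenvalue A X lam \<and> lam \<le> E}.
                     vector_space.dim fscale (eigenspace A X lam))"

definition dom_L :: "nat \<Rightarrow> bool \<Rightarrow> pt set" where
  "dom_L L t = (if t then Gtil L else Gn L)"

definition shift :: "nat \<Rightarrow> nat \<Rightarrow> pt" where
  "shift L i = (if i = 1 then 0 else if i = 2 then (2::real)^(L-1) *\<^sub>R a2 else (2::real)^(L-1) *\<^sub>R a3)"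

definition subdom :: "nat \<Rightarrow> bool \<Rightarrow> nat \<Rightarrow> pt set" where
  "subdom L t i = (\<lambda>p. p + shift L i) ` dom_L (L - 1) t"

end

theory Submission
  imports Defs
begin

text \<open>Each operator \<open>H^{A,\<bullet>}\<close> is a symmetric matrix on \<open>A\<close> whose off-diagonal entries are \<open>-1\<close>
  on edges and whose diagonal depends on the boundary condition only through \<open>deg_A\<close>. The
  spectral theorem (proved here by maximising the Rayleigh quotient) turns the counting
  function into a count of eigenvalues, and the min-max principle gives: if two symmetric
  matrices on \<open>A\<close> and \<open>B\<close> agree on \<open>C \<subseteq> A \<inter> B\<close>, then \<open>N(E) on A \<le> N(E) on B + |A - C|\<close>.
  All six operators on \<open>G_L\<close> agree away from the three extreme vertices and their six
  neighbours, which gives the bound 9. Deleting the three points where the subtriangles meet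
  and their 18 neighbours splits the operator on \<open>G_L\<close> into three blocks, each of which agrees
  with the operator on a subtriangle away from at most 6 points; this gives the second bound,
  in fact with 21 in place of 30.\<close>

section \<open>Symmetric matrices on finite sets of points\<close>

lemma underdetermined_homogeneous_nontrivial:
  fixes a :: "'j \<Rightarrow> 'i \<Rightarrow> real"
  assumes "finite J" "finite I" "card J < card I"
  shows "\<exists>c. (\<forall>i. i \<notin> I \<longrightarrow> c i = 0) \<and> (\<exists>i\<in>I. c i \<noteq> 0) \<and> (\<forall>j\<in>J. (\<Sum>i\<in>I. a j i * c i) = 0)"
  using assms
proof (induction J arbitrary: I a rule: finite_induct)
  case empty
  then obtain i0 where "i0 \<in> I" by (metis card.empty all_not_in_conv less_irrefl)
  then show ?case by (intro exI[of _ "\<lambda>i. if i = i0 then 1 else 0"]) auto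
next
  case (insert j J)
  show ?case
  proof (cases "\<forall>i\<in>I. a j i = 0")
    case True
    from insert.IH[of I a] insert.prems insert.hyps obtain c where
      "\<forall>i. i \<notin> I \<longrightarrow> c i = 0" "\<exists>i\<in>I. c i \<noteq> 0" "\<forall>j\<in>J. (\<Sum>i\<in>I. a j i * c i) = 0"
      by auto
    then show ?thesis using True by (intro exI[of _ c]) auto
  next
    case False
    then obtain i0 where i0: "i0 \<in> I" "a j i0 \<noteq> 0" by auto
    \<comment> \<open>Gaussian elimination of the unknown \<open>i0\<close> using equation \<open>j\<close>.\<close>
    define I' where "I' = I - {i0}"
    define a' where "a' = (\<lambda>j' i. a j' i - a j' i0 * a j i / a j i0)"
    have "card J < card I'" using i0 insert.prems insert.hyps unfolding I'_def by auto
    from insert.IH[of I' a'] this insert.prems obtain c' where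
      c': "\<forall>i. i \<notin> I' \<longrightarrow> c' i = 0" "\<exists>i\<in>I'. c' i \<noteq> 0" "\<forall>j\<in>J. (\<Sum>i\<in>I'. a' j i * c' i) = 0"
      unfolding I'_def by auto
    define c where "c = (\<lambda>i. if i = i0 then - (\<Sum>i'\<in>I'. a j i' * c' i') / a j i0 else c' i)"
    have split: "(\<Sum>i\<in>I. g i) = g i0 + (\<Sum>i\<in>I'. g i)" for g :: "'i \<Rightarrow> real"
      using i0 insert.prems unfolding I'_def by (simp add: sum.remove)
    have on_I': "(\<Sum>i\<in>I'. h i * c i) = (\<Sum>i\<in>I'. h i * c' i)" for h
      by (rule sum.cong) (auto simp: c_def I'_def)
    have eq_j: "(\<Sum>i\<in>I. a j i * c i) = 0"
      unfolding split on_I' using i0 by (simp add: c_def)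
    have eq_J: "(\<Sum>i\<in>I. a j' i * c i) = 0" if "j' \<in> J" for j'
    proof -
      have "(\<Sum>i\<in>I. a j' i * c i) = a j' i0 * c i0 + (\<Sum>i\<in>I'. a j' i * c' i)"
        unfolding split on_I' ..
      also have "\<dots> = (\<Sum>i\<in>I'. a' j' i * c' i)"
        using i0 by (simp add: c_def a'_def algebra_simps sum_subtractf sum_divide_distrib
          sum_distrib_left)
      finally show ?thesis using c'(3) that by simp
    qed
    show ?thesis
      using c' i0 eq_j eq_J by (intro exI[of _ c] conjI) (auto simp: c_def I'_def)
  qed
qed

definition inner_on :: "pt set \<Rightarrow> (pt \<Rightarrow> real) \<Rightarrow> (pt \<Rightarrow> real) \<Rightarrow> real" where
  "inner_on A f g = (\<Sum>x\<in>A. f x * g x)"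

definition matrix_op :: "pt set \<Rightarrow> (pt \<Rightarrow> pt \<Rightarrow> real) \<Rightarrow> (pt \<Rightarrow> real) \<Rightarrow> (pt \<Rightarrow> real)" where
  "matrix_op A M f = (\<lambda>x. if x \<in> A then (\<Sum>y\<in>A. M x y * f y) else 0)"

definition quad_form :: "pt set \<Rightarrow> (pt \<Rightarrow> pt \<Rightarrow> real) \<Rightarrow> (pt \<Rightarrow> real) \<Rightarrow> real" where
  "quad_form A M f = inner_on A (matrix_op A M f) f"

definition symmetric_on :: "pt set \<Rightarrow> (pt \<Rightarrow> pt \<Rightarrow> real) \<Rightarrow> bool" where
  "symmetric_on A M \<longleftrightarrow> (\<forall>x\<in>A. \<forall>y\<in>A. M x y = M y x)"

definition lincomb :: "nat set \<Rightarrow> (nat \<Rightarrow> real) \<Rightarrow> (nat \<Rightarrow> pt \<Rightarrow> real) \<Rightarrow> pt \<Rightarrow> real" where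
  "lincomb I c v = (\<lambda>x. \<Sum>i\<in>I. c i * v i x)"

definition orthonormal_on :: "pt set \<Rightarrow> (nat \<Rightarrow> pt \<Rightarrow> real) \<Rightarrow> nat \<Rightarrow> bool" where
  "orthonormal_on A v n \<longleftrightarrow> (\<forall>i<n. v i \<in> l2 A) \<and>
     (\<forall>i<n. \<forall>j<n. inner_on A (v i) (v j) = (if i = j then 1 else 0))"

definition eigenbasis ::
    "pt set \<Rightarrow> (pt \<Rightarrow> pt \<Rightarrow> real) \<Rightarrow> (nat \<Rightarrow> pt \<Rightarrow> real) \<Rightarrow> (nat \<Rightarrow> real) \<Rightarrow> nat \<Rightarrow> bool"
  where
  "eigenbasis A M v lam n \<longleftrightarrow> orthonormal_on A v n \<and> (\<forall>i<n. matrix_op A M (v i) = fscale (lam i) (v i))"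

definition orth_sphere :: "pt set \<Rightarrow> (nat \<Rightarrow> pt \<Rightarrow> real) \<Rightarrow> nat \<Rightarrow> (pt \<Rightarrow> real) set" where
  "orth_sphere A v k = {g \<in> l2 A. inner_on A g g = 1 \<and> (\<forall>i<k. inner_on A g (v i) = 0)}"

lemma l2D: "f \<in> l2 A \<Longrightarrow> x \<notin> A \<Longrightarrow> f x = 0"
  unfolding l2_def by blast

lemma l2I: "(\<And>x. x \<notin> A \<Longrightarrow> f x = 0) \<Longrightarrow> f \<in> l2 A"
  unfolding l2_def by blast

lemma l2_mono: "f \<in> l2 A \<Longrightarrow> A \<subseteq> B \<Longrightarrow> f \<in> l2 B"
  unfolding l2_def by blast

lemma l2_lin: "f \<in> l2 A \<Longrightarrow> g \<in> l2 A \<Longrightarrow> (\<lambda>x. a * f x + b * g x) \<in> l2 A"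
  by (rule l2I) (simp add: l2D)

lemma l2_fscale: "f \<in> l2 A \<Longrightarrow> fscale c f \<in> l2 A"
  unfolding fscale_def by (rule l2I) (simp add: l2D)

lemma inner_on_commute: "inner_on A f g = inner_on A g f"
  unfolding inner_on_def by (simp add: mult.commute)

lemma inner_on_self_nonneg: "inner_on A f f \<ge> 0"
  unfolding inner_on_def by (simp add: sum_nonneg)

lemma inner_on_self_eq_0:
  assumes "finite A" "f \<in> l2 A"
  shows "inner_on A f f = 0 \<longleftrightarrow> f = 0"
proof
  assume "inner_on A f f = 0"
  then have "\<forall>x\<in>A. f x * f x = 0" using assms(1) unfolding inner_on_def
    by (subst sum_nonneg_eq_0_iff[symmetric]) auto
  then show "f = 0" using l2D[OF assms(2)] by (auto simp: fun_eq_iff)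
qed (simp add: inner_on_def)

lemma inner_on_self_pos: "finite A \<Longrightarrow> f \<in> l2 A \<Longrightarrow> f \<noteq> 0 \<Longrightarrow> inner_on A f f > 0"
  using inner_on_self_eq_0 inner_on_self_nonneg by (metis less_eq_real_def)

lemma inner_on_lin_left: "inner_on A (\<lambda>x. a * f x + b * g x) k
  = a * inner_on A f k + b * inner_on A g k"
  unfolding inner_on_def by (simp add: algebra_simps sum.distrib sum_distrib_left)

lemma inner_on_lin_right: "inner_on A k (\<lambda>x. a * f x + b * g x)
  = a * inner_on A k f + b * inner_on A k g"
  unfolding inner_on_def by (simp add: algebra_simps sum.distrib sum_distrib_left)

lemma inner_on_fscale_left: "inner_on A (fscale c f) g = c * inner_on A f g"
  unfolding inner_on_def fscale_def by (simp add: sum_distrib_left algebra_simps)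

lemma inner_on_fscale_right: "inner_on A f (fscale c g) = c * inner_on A f g"
  using inner_on_fscale_left inner_on_commute by metis

lemma inner_on_lincomb_left: "finite I \<Longrightarrow> inner_on A (lincomb I c v) g
  = (\<Sum>i\<in>I. c i * inner_on A (v i) g)"
  unfolding inner_on_def lincomb_def
  by (simp add: sum_distrib_left sum_distrib_right sum.swap[of _ A] mult.assoc)

lemma inner_on_superset:
  assumes "finite B" "A \<subseteq> B" "f \<in> l2 A"
  shows "inner_on B f g = inner_on A f g"
  unfolding inner_on_def using assms l2D[OF assms(3)] by (intro sum.mono_neutral_right) auto

lemma inner_on_disjoint_supports:
  "f \<in> l2 A1 \<Longrightarrow> g \<in> l2 A2 \<Longrightarrow> A1 \<inter> A2 = {} \<Longrightarrow> inner_on B f g = 0"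
  unfolding inner_on_def using l2D[of f A1] l2D[of g A2]
  by (intro sum.neutral) (metis IntI empty_iff mult_zero_left mult_zero_right)

lemma normalize_unit:
  assumes "inner_on A f f > 0"
  shows "inner_on A (fscale (1 / sqrt (inner_on A f f)) f) (fscale (1 / sqrt (inner_on A f f)) f) = 1"
  using assms by (simp add: inner_on_fscale_left inner_on_fscale_right)

lemma lincomb_l2: "(\<forall>i\<in>I. v i \<in> l2 A) \<Longrightarrow> lincomb I c v \<in> l2 A"
  unfolding lincomb_def l2_def by auto

lemma orthonormal_inner_lincomb:
  assumes "orthonormal_on A v n" "I \<subseteq> {..<n}" "j < n"
  shows "inner_on A (lincomb I c v) (v j) = (if j \<in> I then c j else 0)"
proof -
  have fI: "finite I" using assms(2) finite_subset by blast
  have "inner_on A (lincomb I c v) (v j) = (\<Sum>i\<in>I. c i * (if i = j then 1 else 0))"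
    unfolding inner_on_lincomb_left[OF fI] using assms unfolding orthonormal_on_def
    by (intro sum.cong) auto
  also have "\<dots> = (if j \<in> I then c j else 0)"
    using fI by (simp add: if_distrib sum.delta' cong: if_cong)
  finally show ?thesis .
qed

lemma orthonormal_inner_lincomb_lincomb:
  assumes "orthonormal_on A v n" "I \<subseteq> {..<n}"
  shows "inner_on A (lincomb I c v) (lincomb I d v) = (\<Sum>i\<in>I. c i * d i)"
proof -
  have fI: "finite I" using assms(2) finite_subset by blast
  have "inner_on A (lincomb I c v) (lincomb I d v) = (\<Sum>i\<in>I. c i * inner_on A (v i) (lincomb I d v))"
    by (rule inner_on_lincomb_left[OF fI])
  also have "\<dots> = (\<Sum>i\<in>I. c i * inner_on A (lincomb I d v) (v i))"
    by (intro sum.cong refl arg_cong2[where f="(*)"] inner_on_commute)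
  also have "\<dots> = (\<Sum>i\<in>I. c i * d i)"
    using orthonormal_inner_lincomb[OF assms] assms(2) by (intro sum.cong) auto
  finally show ?thesis .
qed

lemma orthonormal_card_le:
  assumes fA: "finite A" and o: "\<forall>i<m. \<forall>j<m. inner_on A (w i) (w j) = (if i = j then 1 else 0)"
  shows "m \<le> card A"
proof (rule ccontr)
  assume "\<not> m \<le> card A"
  then have "card A < card {..<m}" by simp
  from underdetermined_homogeneous_nontrivial[OF fA finite_lessThan this, of "\<lambda>x i. w i x"]
  obtain c where c: "\<exists>i<m. c i \<noteq> 0" "\<forall>x\<in>A. (\<Sum>i<m. w i x * c i) = 0" by auto
  then obtain i0 where i0: "i0 < m" "c i0 \<noteq> 0" by auto
  have "0 = (\<Sum>x\<in>A. (\<Sum>i<m. w i x * c i) * w i0 x)" using c(2) by simp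
  also have "\<dots> = (\<Sum>i<m. c i * inner_on A (w i) (w i0))"
    unfolding inner_on_def
    by (simp add: sum_distrib_right sum_distrib_left sum.swap[of _ A] algebra_simps)
  also have "\<dots> = (\<Sum>i<m. c i * (if i = i0 then 1 else 0))"
    using o i0 by (intro sum.cong) auto
  also have "\<dots> = c i0" using i0 by (simp add: if_distrib sum.delta' cong: if_cong)
  finally show False using i0 by simp
qed

text \<open>An orthonormal family of maximal length is a basis: a nonzero residual could be normalised and
  appended, contradicting \<open>orthonormal_card_le\<close>.\<close>
lemma orthonormal_expansion:
  assumes fA: "finite A" and o: "orthonormal_on A v (card A)" and f: "f \<in> l2 A"
  shows "f = lincomb {..<card A} (\<lambda>i. inner_on A f (v i)) v"
proof (rule ccontr)
  let ?n = "card A"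
  define g where "g = (\<lambda>x. 1 * f x + (-1) * lincomb {..<?n} (\<lambda>i. inner_on A f (v i)) v x)"
  assume "f \<noteq> lincomb {..<?n} (\<lambda>i. inner_on A f (v i)) v"
  then have "g \<noteq> 0" by (auto simp: g_def fun_eq_iff)
  have g_l2: "g \<in> l2 A"
    unfolding g_def using o by (intro l2_lin f lincomb_l2) (auto simp: orthonormal_on_def)
  have g_orth: "inner_on A g (v j) = 0" if "j < ?n" for j
    using orthonormal_inner_lincomb[OF o _ that] that unfolding g_def inner_on_lin_left by simp
  define s where "s = 1 / sqrt (inner_on A g g)"
  have s1: "inner_on A (fscale s g) (fscale s g) = 1"
    unfolding s_def by (rule normalize_unit[OF inner_on_self_pos[OF fA g_l2 \<open>g \<noteq> 0\<close>]])
  define w where "w = (\<lambda>i. if i < ?n then v i else fscale s g)"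
  have "\<forall>i<Suc ?n. \<forall>j<Suc ?n. inner_on A (w i) (w j) = (if i = j then 1 else 0)"
    using o s1 g_orth
    by (auto simp: w_def orthonormal_on_def less_Suc_eq inner_on_fscale_left inner_on_fscale_right
             inner_on_commute[of A "v _" g])
  from orthonormal_card_le[OF fA this] show False by simp
qed

lemma matrix_op_l2: "matrix_op A M f \<in> l2 A"
  unfolding matrix_op_def l2_def by auto

lemma matrix_op_lin: "matrix_op A M (\<lambda>x. a * f x + b * g x)
  = (\<lambda>x. a * matrix_op A M f x + b * matrix_op A M g x)"
  unfolding matrix_op_def by (auto simp: fun_eq_iff algebra_simps sum.distrib sum_distrib_left)

lemma matrix_op_fscale: "matrix_op A M (fscale c f) = fscale c (matrix_op A M f)"
  unfolding matrix_op_def fscale_def by (auto simp: fun_eq_iff algebra_simps sum_distrib_left)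

lemma matrix_op_lincomb: "finite I \<Longrightarrow> matrix_op A M (lincomb I c v)
  = lincomb I c (\<lambda>i. matrix_op A M (v i))"
  unfolding matrix_op_def lincomb_def
  by (auto simp: fun_eq_iff sum_distrib_left sum.swap[of _ A] algebra_simps)

lemma inner_on_matrix_op_symmetric:
  assumes "symmetric_on A M"
  shows "inner_on A (matrix_op A M f) g = inner_on A f (matrix_op A M g)"
proof -
  have "inner_on A (matrix_op A M f) g = (\<Sum>x\<in>A. \<Sum>y\<in>A. M x y * f y * g x)"
    unfolding inner_on_def matrix_op_def by (simp add: sum_distrib_right)
  also have "\<dots> = (\<Sum>y\<in>A. \<Sum>x\<in>A. M y x * f y * g x)"
    by (subst sum.swap) (intro sum.cong refl, use assms in \<open>auto simp: symmetric_on_def\<close>)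
  also have "\<dots> = inner_on A f (matrix_op A M g)"
    unfolding inner_on_def matrix_op_def by (simp add: sum_distrib_left algebra_simps)
  finally show ?thesis .
qed

lemma quad_form_fscale: "quad_form A M (fscale c f) = c * c * quad_form A M f"
  unfolding quad_form_def matrix_op_fscale inner_on_fscale_left inner_on_fscale_right by simp

lemma eigenbasis_matrix_op_lincomb:
  assumes "eigenbasis A M v lam n" "I \<subseteq> {..<n}"
  shows "matrix_op A M (lincomb I c v) = lincomb I (\<lambda>i. c i * lam i) v"
proof -
  have fI: "finite I" using assms(2) finite_subset by blast
  show ?thesis unfolding matrix_op_lincomb[OF fI] using assms
    unfolding eigenbasis_def lincomb_def fscale_def
    by (auto simp: fun_eq_iff intro!: sum.cong)
qed

lemma quad_form_expand: "quad_form A M g = (\<Sum>x\<in>A. (\<Sum>y\<in>A. M x y * g y) * g x)"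
  unfolding quad_form_def inner_on_def matrix_op_def by simp

lemma continuous_on_coordinate: "continuous_on T (\<lambda>g::pt \<Rightarrow> real. g x)"
  by (rule continuous_on_subset[OF continuous_on_product_coordinates]) simp

lemma closed_orth_sphere: "closed (orth_sphere A v k)"
proof -
  have "orth_sphere A v k = (\<Inter>x\<in>-A. {g. g x = 0}) \<inter> {g. inner_on A g g = 1}
      \<inter> (\<Inter>i\<in>{..<k}. {g. inner_on A g (v i) = 0})"
    unfolding orth_sphere_def l2_def by auto
  moreover have "continuous_on UNIV (\<lambda>g. inner_on A g (w g))" if "continuous_on UNIV w" for w
    unfolding inner_on_def
    by (intro continuous_on_sum continuous_on_mult continuous_on_coordinate
        continuous_on_product_then_coordinatewise[OF that])
  ultimately show ?thesis
    by (auto intro!: closed_Int closed_INT closed_Collect_eq continuous_on_coordinate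
      continuous_on_const)
qed

lemma compact_orth_sphere:
  assumes "finite A"
  shows "compact (orth_sphere A v k)"
proof -
  define K where "K = PiE UNIV (\<lambda>x::pt. if x \<in> A then {-1..1::real} else {0})"
  have "compactin (product_topology (\<lambda>_. euclidean) UNIV) K"
    unfolding K_def by (subst compactin_PiE) auto
  then have "compact K" by (simp add: euclidean_product_topology)
  moreover have "orth_sphere A v k \<subseteq> K"
  proof
    fix g assume g: "g \<in> orth_sphere A v k"
    have "\<bar>g x\<bar> \<le> 1" if "x \<in> A" for x
    proof -
      have "(g x)\<^sup>2 \<le> inner_on A g g" unfolding inner_on_def power2_eq_square
        by (rule member_le_sum[OF that]) (auto simp: assms)
      then show ?thesis using g by (simp add: orth_sphere_def abs_square_le_1)
    qed
    then show "g \<in> K" using g l2D by (auto simp: K_def orth_sphere_def PiE_def Pi_def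
      extensional_def abs_le_iff)
  qed
  ultimately show ?thesis
    using compact_Int_closed[OF _ closed_orth_sphere] by (metis Int_absorb1)
qed

lemma orth_sphere_normalize:
  assumes "finite A" "f \<in> l2 A" "f \<noteq> 0" "\<forall>i<k. inner_on A f (v i) = 0"
  shows "fscale (1 / sqrt (inner_on A f f)) f \<in> orth_sphere A v k"
  using assms normalize_unit[OF inner_on_self_pos[OF assms(1-3)]]
  by (simp add: orth_sphere_def l2_fscale inner_on_fscale_left)

lemma quad_form_maximiser_exists:
  assumes "finite A" "orth_sphere A v k \<noteq> {}"
  shows "\<exists>g\<in>orth_sphere A v k. \<forall>h\<in>orth_sphere A v k. quad_form A M h \<le> quad_form A M g"
proof -
  have "continuous_on (orth_sphere A v k) (quad_form A M)"
    unfolding quad_form_expand[abs_def]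
    by (intro continuous_on_sum continuous_on_mult continuous_on_const continuous_on_coordinate)
  then show ?thesis
    using continuous_attains_sup[OF compact_orth_sphere[OF assms(1)] assms(2)] by blast
qed

lemma quad_form_le_maximum:
  assumes fA: "finite A" and g: "g \<in> orth_sphere A v k"
    and max: "\<forall>h\<in>orth_sphere A v k. quad_form A M h \<le> quad_form A M g"
    and h: "h \<in> l2 A" "\<forall>i<k. inner_on A h (v i) = 0"
  shows "quad_form A M h \<le> quad_form A M g * inner_on A h h"
proof (cases "h = 0")
  case True
  then show ?thesis by (simp add: quad_form_def inner_on_def)
next
  case False
  define r where "r = 1 / sqrt (inner_on A h h)"
  have pos: "inner_on A h h > 0" by (rule inner_on_self_pos[OF fA h(1) False])
  have "r * r * quad_form A M h \<le> quad_form A M g"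
    using max orth_sphere_normalize[OF fA h(1) False h(2)] unfolding r_def[symmetric]
    by (auto simp: quad_form_fscale)
  then show ?thesis using pos by (simp add: r_def pos_divide_le_eq)
qed

lemma quad_form_lin:
  assumes sym: "symmetric_on A M"
  shows "quad_form A M (\<lambda>x. 1 * g x + t * h x)
    = quad_form A M g + 2 * t * inner_on A (matrix_op A M g) h + t * t * quad_form A M h"
proof -
  have "inner_on A (matrix_op A M h) g = inner_on A (matrix_op A M g) h"
    using inner_on_matrix_op_symmetric[OF sym, of h g] inner_on_commute[of A h] by simp
  then show ?thesis
    unfolding quad_form_def matrix_op_lin inner_on_lin_left inner_on_lin_right
    by (simp add: algebra_simps)
qed

lemma nonneg_eq_0_if_quadratic_le:
  fixes a b :: real
  assumes "a \<ge> 0" "\<And>t. t > 0 \<Longrightarrow> 2 * t * a + t * t * b \<le> 0"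
  shows "a = 0"
proof (rule ccontr)
  assume "a \<noteq> 0" then have a: "a > 0" using assms(1) by simp
  define t where "t = a / (\<bar>b\<bar> + 1)"
  have t: "t > 0" using a unfolding t_def by simp
  have "t * \<bar>b\<bar> \<le> a" unfolding t_def using a by (simp add: field_simps)
  then have "t * (t * \<bar>b\<bar>) \<le> t * a" using t by (intro mult_left_mono) auto
  moreover have "t * t * (- \<bar>b\<bar>) \<le> t * t * b" using t by (intro mult_left_mono) auto
  moreover have "t * a > 0" using t a by simp
  ultimately have "2 * t * a + t * t * b > 0" by (simp add: algebra_simps)
  with assms(2)[OF t] show False by simp
qed

text \<open>First variation of the Rayleigh quotient: perturbing the maximiser \<open>g\<close> by \<open>t h\<close>, where
  \<open>h = M g - \<mu> g\<close> stays orthogonal to the \<open>v i\<close>, gives \<open>2 t |h|\<^sup>2 + O(t\<^sup>2) \<le> 0\<close>.\<close>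
lemma maximiser_eigenvector:
  assumes fA: "finite A" and sym: "symmetric_on A M"
    and ev: "\<forall>i<k. matrix_op A M (v i) = fscale (lam i) (v i)"
    and g: "g \<in> orth_sphere A v k"
    and max: "\<forall>h\<in>orth_sphere A v k. quad_form A M h \<le> quad_form A M g"
  shows "matrix_op A M g = fscale (quad_form A M g) g"
proof -
  define \<mu> where "\<mu> = quad_form A M g"
  have g_l2: "g \<in> l2 A" and g1: "inner_on A g g = 1" and g_orth: "\<forall>i<k. inner_on A g (v i) = 0"
    using g unfolding orth_sphere_def by auto
  define h where "h = (\<lambda>x. 1 * matrix_op A M g x + (- \<mu>) * g x)"
  have h_l2: "h \<in> l2 A" unfolding h_def by (intro l2_lin matrix_op_l2 g_l2)
  have h_orth: "\<forall>i<k. inner_on A h (v i) = 0"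
  proof (intro allI impI)
    fix i assume i: "i < k"
    have "inner_on A (matrix_op A M g) (v i) = inner_on A g (matrix_op A M (v i))"
      by (rule inner_on_matrix_op_symmetric[OF sym])
    also have "\<dots> = 0" using ev g_orth i by (simp add: inner_on_fscale_right)
    finally show "inner_on A h (v i) = 0" unfolding h_def inner_on_lin_left using g_orth i by simp
  qed
  have "2 * t * inner_on A h h + t * t * (quad_form A M h - \<mu> * inner_on A h h) \<le> 0" if "t > 0" for t
  proof -
    define f where "f = (\<lambda>x. 1 * g x + t * h x)"
    have le: "quad_form A M f \<le> \<mu> * inner_on A f f"
      unfolding \<mu>_def f_def
      by (rule quad_form_le_maximum[OF fA g max l2_lin[OF g_l2 h_l2]])
         (unfold inner_on_lin_left, use g_orth h_orth in simp)
    have qf: "quad_form A M f = \<mu> + 2 * t * inner_on A (matrix_op A M g) h + t * t * quad_form A M h"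
      unfolding f_def \<mu>_def by (rule quad_form_lin[OF sym])
    have ff: "inner_on A f f = 1 + 2 * t * inner_on A g h + t * t * inner_on A h h"
      unfolding f_def inner_on_lin_left inner_on_lin_right using g1 inner_on_commute[of A g h]
      by (simp add: algebra_simps)
    have "inner_on A h h = 1 * inner_on A (matrix_op A M g) h + (- \<mu>) * inner_on A g h"
      by (subst (1) h_def, rule inner_on_lin_left)
    then have gh: "inner_on A (matrix_op A M g) h = inner_on A h h + \<mu> * inner_on A g h" by simp
    have "quad_form A M f - \<mu> * inner_on A f f
        = 2 * t * inner_on A h h + t * t * (quad_form A M h - \<mu> * inner_on A h h)"
      unfolding qf ff gh by (simp add: algebra_simps)
    then show ?thesis using le by linarith
  qed
  then have "inner_on A h h = 0"
    using nonneg_eq_0_if_quadratic_le[OF inner_on_self_nonneg] by blast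
  then have "h = 0" using inner_on_self_eq_0[OF fA h_l2] by simp
  then show ?thesis unfolding h_def fscale_def \<mu>_def by (auto simp: fun_eq_iff)
qed

lemma eigenbasis_extend:
  assumes fA: "finite A" and sym: "symmetric_on A M" and eb: "eigenbasis A M v lam k" and k: "k < card A"
  shows "\<exists>g \<mu>. eigenbasis A M (v(k := g)) (lam(k := \<mu>)) (Suc k)"
proof -
  have o: "orthonormal_on A v k" and ev: "\<forall>i<k. matrix_op A M (v i) = fscale (lam i) (v i)"
    using eb by (auto simp: eigenbasis_def)
  have "card {..<k} < card A" using k by simp
  from underdetermined_homogeneous_nontrivial[OF finite_lessThan fA this, of "\<lambda>i x. v i x"]
  obtain c where c: "\<forall>x. x \<notin> A \<longrightarrow> c x = 0" "\<exists>x\<in>A. c x \<noteq> 0"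
    "\<forall>i<k. (\<Sum>x\<in>A. v i x * c x) = 0" by auto
  have "c \<in> l2 A" "c \<noteq> 0" "\<forall>i<k. inner_on A c (v i) = 0"
    using c by (auto intro: l2I simp: inner_on_def mult.commute)
  from orth_sphere_normalize[OF fA this] have "orth_sphere A v k \<noteq> {}" by blast
  from quad_form_maximiser_exists[OF fA this] obtain g where
    g: "g \<in> orth_sphere A v k" "\<forall>h\<in>orth_sphere A v k. quad_form A M h \<le> quad_form A M g" by blast
  note g_eig = maximiser_eigenvector[OF fA sym ev g]
  have g_l2: "g \<in> l2 A" and g1: "inner_on A g g = 1" using g(1) unfolding orth_sphere_def by auto
  have g_orth: "inner_on A g (v i) = 0" "inner_on A (v i) g = 0" if "i < k" for i
    using g(1) that inner_on_commute[of A g "v i"] unfolding orth_sphere_def by auto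
  have "eigenbasis A M (v(k := g)) (lam(k := quad_form A M g)) (Suc k)"
    unfolding eigenbasis_def orthonormal_on_def
  proof (intro conjI allI impI)
    fix i assume "i < Suc k"
    then show "(v(k := g)) i \<in> l2 A"
      and "matrix_op A M ((v(k := g)) i) = fscale ((lam(k := quad_form A M g)) i) ((v(k := g)) i)"
      using o ev g_l2 g_eig by (auto simp: orthonormal_on_def less_Suc_eq)
  next
    fix i j assume "i < Suc k" "j < Suc k"
    then show "inner_on A ((v(k := g)) i) ((v(k := g)) j) = (if i = j then 1 else 0)"
      using o g1 g_orth by (cases "i = k"; cases "j = k") (auto simp: orthonormal_on_def less_Suc_eq)
  qed
  then show ?thesis by blast
qed

lemma eigenbasis_exists:
  assumes fA: "finite A" and sym: "symmetric_on A M"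
  shows "\<exists>v lam. eigenbasis A M v lam (card A)"
proof -
  have "\<exists>v lam. eigenbasis A M v lam k" if "k \<le> card A" for k
    using that
  proof (induction k)
    case 0
    show ?case by (auto simp: eigenbasis_def orthonormal_on_def)
  next
    case (Suc k)
    then obtain v lam where "eigenbasis A M v lam k" by auto
    then show ?case using eigenbasis_extend[OF fA sym] Suc.prems by fastforce
  qed
  then show ?thesis by blast
qed

interpretation fun_vs: vector_space fscale
  by unfold_locales (auto simp: fscale_def fun_eq_iff algebra_simps)

lemma lincomb_eq_sum: "lincomb I c v = (\<Sum>i\<in>I. fscale (c i) (v i))"
proof (induction I rule: infinite_finite_induct)
  case (insert i I)
  then show ?case by (simp add: lincomb_def fscale_def fun_eq_iff)
qed (simp_all add: lincomb_def fun_eq_iff)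

lemma orthonormal_inj: "orthonormal_on A v n \<Longrightarrow> inj_on v {..<n}"
  unfolding orthonormal_on_def by (rule inj_onI) (metis lessThan_iff zero_neq_one)

lemma orthonormal_independent:
  assumes o: "orthonormal_on A v n" and I: "I \<subseteq> {..<n}"
  shows "fun_vs.independent (v ` I)"
proof (rule fun_vs.independent_if_scalars_zero)
  show "finite (v ` I)" using I finite_subset by blast
next
  fix f x assume s: "(\<Sum>x\<in>v ` I. fscale (f x) x) = 0" and x: "x \<in> v ` I"
  then obtain j where j: "j \<in> I" "x = v j" by auto
  have "inj_on v I" using orthonormal_inj[OF o] I inj_on_subset by blast
  then have "lincomb I (\<lambda>i. f (v i)) v = 0" using s by (simp add: lincomb_eq_sum sum.reindex)
  then have "inner_on A (lincomb I (\<lambda>i. f (v i)) v) (v j) = 0" unfolding inner_on_def by simp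
  then show "f x = 0" using orthonormal_inner_lincomb[OF o I, of j] j I by auto
qed

lemma subspace_eigenspace: "fun_vs.subspace (eigenspace A (matrix_op A M) \<mu>)"
  unfolding fun_vs.subspace_def eigenspace_def
proof (intro conjI ballI allI)
  show "0 \<in> {f \<in> l2 A. matrix_op A M f = fscale \<mu> f}"
    by (auto simp: l2_def matrix_op_def fscale_def fun_eq_iff)
next
  fix f g
  assume "f \<in> {f \<in> l2 A. matrix_op A M f = fscale \<mu> f}" "g \<in> {f \<in> l2 A. matrix_op A M f = fscale \<mu> f}"
  then show "f + g \<in> {f \<in> l2 A. matrix_op A M f = fscale \<mu> f}"
    using matrix_op_lin[of A M 1 f 1 g] l2_lin[of f A g 1 1]
    by (auto simp: fscale_def fun_eq_iff algebra_simps plus_fun_def)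
next
  fix c f assume "f \<in> {f \<in> l2 A. matrix_op A M f = fscale \<mu> f}"
  then show "fscale c f \<in> {f \<in> l2 A. matrix_op A M f = fscale \<mu> f}"
    using matrix_op_fscale l2_fscale by (auto simp: fscale_def fun_eq_iff)
qed

text \<open>An eigenvector for \<open>\<mu>\<close> is orthogonal to the basis vectors with eigenvalue \<open>\<noteq> \<mu>\<close>,
  so its expansion only involves those with eigenvalue \<open>\<mu>\<close>.\<close>
lemma eigenspace_eq_span:
  assumes fA: "finite A" and sym: "symmetric_on A M" and eb: "eigenbasis A M v lam (card A)"
  shows "eigenspace A (matrix_op A M) \<mu> = fun_vs.span (v ` {i. i < card A \<and> lam i = \<mu>})"
proof
  let ?n = "card A" and ?I = "{i. i < card A \<and> lam i = \<mu>}"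
  have o: "orthonormal_on A v ?n" and ev: "\<forall>i<?n. matrix_op A M (v i) = fscale (lam i) (v i)"
    using eb unfolding eigenbasis_def by auto
  show "eigenspace A (matrix_op A M) \<mu> \<subseteq> fun_vs.span (v ` ?I)"
  proof
    fix f assume "f \<in> eigenspace A (matrix_op A M) \<mu>"
    then have f: "f \<in> l2 A" "matrix_op A M f = fscale \<mu> f" unfolding eigenspace_def by auto
    have orth: "inner_on A f (v i) = 0" if "i < ?n" "lam i \<noteq> \<mu>" for i
    proof -
      have "\<mu> * inner_on A f (v i) = inner_on A (matrix_op A M f) (v i)"
        using f(2) by (simp add: inner_on_fscale_left)
      also have "\<dots> = inner_on A f (matrix_op A M (v i))" by (rule inner_on_matrix_op_symmetric[OF sym])
      also have "\<dots> = lam i * inner_on A f (v i)" using ev that by (simp add: inner_on_fscale_right)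
      finally show ?thesis using that by simp
    qed
    have "f = lincomb {..<?n} (\<lambda>i. inner_on A f (v i)) v" by (rule orthonormal_expansion[OF fA o f(1)])
    also have "\<dots> = lincomb ?I (\<lambda>i. inner_on A f (v i)) v"
      unfolding lincomb_def using orth by (intro ext sum.mono_neutral_right) auto
    also have "\<dots> \<in> fun_vs.span (v ` ?I)"
      unfolding lincomb_eq_sum by (intro fun_vs.span_sum fun_vs.span_scale fun_vs.span_base) auto
    finally show "f \<in> fun_vs.span (v ` ?I)" .
  qed
  have "v ` ?I \<subseteq> eigenspace A (matrix_op A M) \<mu>"
    using ev o unfolding eigenspace_def orthonormal_on_def by auto
  then show "fun_vs.span (v ` ?I) \<subseteq> eigenspace A (matrix_op A M) \<mu>"
    by (rule fun_vs.span_minimal[OF _ subspace_eigenspace])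
qed

lemma Ncount_eigenbasis:
  assumes fA: "finite A" and sym: "symmetric_on A M" and eb: "eigenbasis A M v lam (card A)"
  shows "Ncount E A (matrix_op A M) = card {i. i < card A \<and> lam i \<le> E}"
proof -
  let ?n = "card A" and ?P = "{i. i < card A \<and> lam i \<le> E}"
  have o: "orthonormal_on A v ?n" using eb unfolding eigenbasis_def by auto
  have dim: "fun_vs.dim (eigenspace A (matrix_op A M) \<mu>) = card {i. i < ?n \<and> lam i = \<mu>}" for \<mu>
  proof -
    have sub: "{i. i < ?n \<and> lam i = \<mu>} \<subseteq> {..<?n}" by auto
    then have "inj_on v {i. i < ?n \<and> lam i = \<mu>}" using orthonormal_inj[OF o] inj_on_subset by blast
    then show ?thesis unfolding eigenspace_eq_span[OF fA sym eb]
      using fun_vs.dim_span_eq_card_independent[OF orthonormal_independent[OF o sub]] card_image by simp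
  qed
  have eigenvalue: "is_eigenvalue A (matrix_op A M) \<mu> \<longleftrightarrow> (\<exists>i<?n. lam i = \<mu>)" for \<mu>
  proof
    assume "is_eigenvalue A (matrix_op A M) \<mu>"
    then obtain f where "f \<in> fun_vs.span (v ` {i. i < ?n \<and> lam i = \<mu>})" "f \<noteq> 0"
      unfolding is_eigenvalue_def eigenspace_eq_span[OF fA sym eb] by auto
    then show "\<exists>i<?n. lam i = \<mu>" by (cases "{i. i < ?n \<and> lam i = \<mu>} = {}") auto
  next
    assume "\<exists>i<?n. lam i = \<mu>"
    then obtain i where i: "i < ?n" "lam i = \<mu>" by auto
    then have "inner_on A (v i) (v i) = 1" using o unfolding orthonormal_on_def by auto
    then have "v i \<noteq> 0" unfolding inner_on_def by auto
    moreover have "v i \<in> eigenspace A (matrix_op A M) \<mu>"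
      using eb i unfolding eigenbasis_def eigenspace_def orthonormal_on_def by auto
    ultimately show "is_eigenvalue A (matrix_op A M) \<mu>" unfolding is_eigenvalue_def by blast
  qed
  have "{\<mu>. is_eigenvalue A (matrix_op A M) \<mu> \<and> \<mu> \<le> E} = lam ` ?P"
    unfolding eigenvalue by auto
  then have "Ncount E A (matrix_op A M) = (\<Sum>\<mu>\<in>lam ` ?P. card {i. i < ?n \<and> lam i = \<mu>})"
    unfolding Ncount_def dim by simp
  also have "\<dots> = (\<Sum>\<mu>\<in>lam ` ?P. card {i \<in> ?P. lam i = \<mu>})"
    by (intro sum.cong refl arg_cong[where f = card]) auto
  also have "\<dots> = card ?P"
    using sum.image_gen[of ?P "\<lambda>_. 1::nat" lam] by simp
  finally show ?thesis .
qed

section \<open>Comparison and decoupling of eigenvalue counting functions\<close>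

lemma quad_form_restrict:
  assumes fA: "finite A" and C: "C \<subseteq> A" and f: "f \<in> l2 C"
  shows "quad_form A M f = (\<Sum>x\<in>C. \<Sum>y\<in>C. M x y * f y * f x)"
proof -
  have inner: "(\<Sum>y\<in>A. M x y * f y) = (\<Sum>y\<in>C. M x y * f y)" for x
    using fA C l2D[OF f] by (intro sum.mono_neutral_right) auto
  have "quad_form A M f = (\<Sum>x\<in>C. (\<Sum>y\<in>A. M x y * f y) * f x)"
    unfolding quad_form_expand using fA C l2D[OF f] by (intro sum.mono_neutral_right) auto
  then show ?thesis by (simp add: inner sum_distrib_right)
qed

lemma quad_form_le_on_low_span:
  assumes eb: "eigenbasis A M v lam n" and P: "P \<subseteq> {i. i < n \<and> lam i \<le> E}"
  shows "quad_form A M (lincomb P c v) \<le> E * inner_on A (lincomb P c v) (lincomb P c v)"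
proof -
  have o: "orthonormal_on A v n" using eb unfolding eigenbasis_def by auto
  have Pn: "P \<subseteq> {..<n}" using P by auto
  have "quad_form A M (lincomb P c v) = (\<Sum>i\<in>P. lam i * (c i * c i))"
    unfolding quad_form_def eigenbasis_matrix_op_lincomb[OF eb Pn]
      orthonormal_inner_lincomb_lincomb[OF o Pn]
    by (simp add: algebra_simps)
  also have "\<dots> \<le> (\<Sum>i\<in>P. E * (c i * c i))"
    using P by (intro sum_mono mult_right_mono) auto
  finally show ?thesis unfolding orthonormal_inner_lincomb_lincomb[OF o Pn]
    by (simp add: sum_distrib_left)
qed

lemma quad_form_gt_orth_low:
  assumes fB: "finite B" and eb: "eigenbasis B M u mu (card B)"
    and f: "f \<in> l2 B" "f \<noteq> 0" and orth: "\<forall>j<card B. mu j \<le> E \<longrightarrow> inner_on B f (u j) = 0"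
  shows "quad_form B M f > E * inner_on B f f"
proof -
  let ?m = "card B"
  have o: "orthonormal_on B u ?m" using eb unfolding eigenbasis_def by auto
  define d where "d = (\<lambda>j. inner_on B f (u j))"
  have f_eq: "f = lincomb {..<?m} d u" unfolding d_def by (rule orthonormal_expansion[OF fB o f(1)])
  have ff: "inner_on B f f = (\<Sum>j<?m. d j * d j)"
    by (subst (1 2) f_eq, rule orthonormal_inner_lincomb_lincomb[OF o]) auto
  have "quad_form B M f = inner_on B (lincomb {..<?m} (\<lambda>j. d j * mu j) u) (lincomb {..<?m} d u)"
    unfolding quad_form_def by (subst (1 2) f_eq, subst eigenbasis_matrix_op_lincomb[OF eb]) auto
  also have "\<dots> = (\<Sum>j<?m. d j * mu j * d j)" by (rule orthonormal_inner_lincomb_lincomb[OF o]) auto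
  finally have qf: "quad_form B M f = (\<Sum>j<?m. mu j * (d j * d j))" by (simp add: algebra_simps)
  have d_low: "d j = 0" if "j < ?m" "mu j \<le> E" for j using orth that unfolding d_def by auto
  obtain j0 where j0: "j0 < ?m" "d j0 \<noteq> 0"
    using f(2) inner_on_self_eq_0[OF fB f(1)] ff by force
  have "0 < (\<Sum>j<?m. (mu j - E) * (d j * d j))"
  proof (rule sum_pos2[of "{..<?m}" j0])
    have "mu j0 > E" using j0 d_low by force
    moreover have "d j0 * d j0 > 0" using j0(2) not_real_square_gt_zero by blast
    ultimately show "0 < (mu j0 - E) * (d j0 * d j0)" by simp
    show "0 \<le> (mu j - E) * (d j * d j)" if "j \<in> {..<?m}" for j
      using that d_low[of j] by (cases "mu j \<le> E") auto
  qed (use j0 in auto)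
  then show ?thesis unfolding qf ff by (simp add: algebra_simps sum_subtractf sum_distrib_left)
qed

text \<open>Dimension count: \<open>card (A - C) + card R\<close> linear conditions cannot kill a span of
  \<open>card P\<close> orthonormal vectors.\<close>
lemma lincomb_supported_orthogonal_exists:
  assumes fA: "finite A" and o: "orthonormal_on A v n" and P: "P \<subseteq> {..<n}" and fR: "finite R"
    and lt: "card (A - C) + card R < card P"
  shows "\<exists>c. lincomb P c v \<noteq> 0 \<and> lincomb P c v \<in> l2 C \<and> (\<forall>j\<in>R. inner_on B (lincomb P c v) (u j) = 0)"
proof -
  define a where "a = (\<lambda>e i. case e of Inl x \<Rightarrow> v i x | Inr j \<Rightarrow> inner_on B (v i) (u j))"
  have fP: "finite P" using P finite_subset by blast
  have "card ((A - C) <+> R) < card P" using fA fR lt by (simp add: card_Plus)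
  from underdetermined_homogeneous_nontrivial[OF _ fP this, of a] fA fR obtain c where
    c: "\<exists>i\<in>P. c i \<noteq> 0" "\<forall>e\<in>(A - C) <+> R. (\<Sum>i\<in>P. a e i * c i) = 0"
    by auto
  define f where "f = lincomb P c v"
  have fA_l2: "f \<in> l2 A" unfolding f_def using o P by (intro lincomb_l2) (auto simp: orthonormal_on_def)
  have "f \<in> l2 C"
  proof (rule l2I)
    fix x assume "x \<notin> C"
    then show "f x = 0"
      using c(2)[rule_format, of "Inl x"] l2D[OF fA_l2, of x]
      by (cases "x \<in> A") (auto simp: a_def f_def lincomb_def mult.commute)
  qed
  moreover have "inner_on B f (u j) = 0" if "j \<in> R" for j
    using that c(2)[rule_format, of "Inr j"] by (auto simp: a_def f_def inner_on_lincomb_left[OF fP]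
      mult.commute)
  moreover have "f \<noteq> 0"
  proof
    assume "f = 0"
    then have "(\<Sum>i\<in>P. c i * c i) = 0"
      using orthonormal_inner_lincomb_lincomb[OF o P, of c c] by (simp add: f_def inner_on_def)
    then show False using c(1) fP by (simp add: sum_nonneg_eq_0_iff)
  qed
  ultimately show ?thesis unfolding f_def by blast
qed

text \<open>Min-max comparison: a nonzero vector spanned by the eigenvectors of \<open>M\<close> with eigenvalue
  \<open>\<le> E\<close>, supported in \<open>C\<close> and orthogonal to those of \<open>M'\<close>, cannot exist.\<close>
lemma Ncount_le_if_agree:
  assumes fA: "finite A" and fB: "finite B" and symA: "symmetric_on A M" and symB: "symmetric_on B M'"
    and CA: "C \<subseteq> A" and CB: "C \<subseteq> B" and agree: "\<forall>x\<in>C. \<forall>y\<in>C. M x y = M' x y"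
  shows "Ncount E A (matrix_op A M) \<le> Ncount E B (matrix_op B M') + card (A - C)"
proof -
  obtain v lam where eA: "eigenbasis A M v lam (card A)" using eigenbasis_exists[OF fA symA] by blast
  obtain u mu where eB: "eigenbasis B M' u mu (card B)" using eigenbasis_exists[OF fB symB] by blast
  let ?P = "{i. i < card A \<and> lam i \<le> E}" and ?R = "{j. j < card B \<and> mu j \<le> E}"
  have "card ?P \<le> card ?R + card (A - C)"
  proof (rule ccontr)
    assume "\<not> ?thesis"
    then obtain c where f: "lincomb ?P c v \<noteq> 0" "lincomb ?P c v \<in> l2 C"
      "\<forall>j\<in>?R. inner_on B (lincomb ?P c v) (u j) = 0"
      using lincomb_supported_orthogonal_exists[of A v "card A" ?P ?R C B u] fA eA
      by (auto simp: eigenbasis_def)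
    let ?f = "lincomb ?P c v"
    have "quad_form A M ?f \<le> E * inner_on A ?f ?f"
      by (rule quad_form_le_on_low_span[OF eA]) auto
    moreover have "quad_form B M' ?f > E * inner_on B ?f ?f"
      using f by (intro quad_form_gt_orth_low[OF fB eB l2_mono[OF f(2) CB]]) auto
    moreover have "quad_form A M ?f = quad_form B M' ?f"
      unfolding quad_form_restrict[OF fA CA f(2)] quad_form_restrict[OF fB CB f(2)] using agree by simp
    moreover have "inner_on A ?f ?f = inner_on B ?f ?f"
      using inner_on_superset[OF fA CA f(2)] inner_on_superset[OF fB CB f(2)] by simp
    ultimately show False by simp
  qed
  then show ?thesis unfolding Ncount_eigenbasis[OF fA symA eA] Ncount_eigenbasis[OF fB symB eB] .
qed

lemma matrix_op_union_block:
  assumes fin: "finite A1" "finite A2" and disj: "A1 \<inter> A2 = {}" and f: "f \<in> l2 A1"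
    and cross: "\<forall>x\<in>A2. \<forall>y\<in>A1. M x y = 0"
  shows "matrix_op (A1 \<union> A2) M f = matrix_op A1 M f"
proof
  fix x
  have "(\<Sum>y\<in>A1 \<union> A2. M x y * f y) = (\<Sum>y\<in>A1. M x y * f y) + (\<Sum>y\<in>A2. M x y * f y)"
    using fin disj by (rule sum.union_disjoint)
  moreover have "(\<Sum>y\<in>A2. M x y * f y) = 0" using disj l2D[OF f] by (intro sum.neutral) auto
  moreover have "(\<Sum>y\<in>A1. M x y * f y) = 0" if "x \<in> A2" using cross that by (intro sum.neutral) auto
  ultimately show "matrix_op (A1 \<union> A2) M f x = matrix_op A1 M f x"
    unfolding matrix_op_def by auto
qed

lemma eigenbasis_union:
  assumes fin: "finite A1" "finite A2" and disj: "A1 \<inter> A2 = {}"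
    and cross: "\<forall>x\<in>A1. \<forall>y\<in>A2. M x y = 0 \<and> M y x = 0"
    and e1: "eigenbasis A1 M v lam n1" and e2: "eigenbasis A2 M u mu n2"
  shows "eigenbasis (A1 \<union> A2) M (\<lambda>i. if i < n1 then v i else u (i - n1))
           (\<lambda>i. if i < n1 then lam i else mu (i - n1)) (n1 + n2)"
proof -
  have o1: "orthonormal_on A1 v n1" and o2: "orthonormal_on A2 u n2"
    using e1 e2 unfolding eigenbasis_def by auto
  have fU: "finite (A1 \<union> A2)" using fin by simp
  have v: "v i \<in> l2 A1" "v i \<in> l2 (A1 \<union> A2)"
    "matrix_op (A1 \<union> A2) M (v i) = fscale (lam i) (v i)" if "i < n1" for i
    using that e1 o1 l2_mono matrix_op_union_block[OF fin disj _] cross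
    by (auto simp: eigenbasis_def orthonormal_on_def)
  have u: "u i \<in> l2 A2" "u i \<in> l2 (A1 \<union> A2)"
    "matrix_op (A1 \<union> A2) M (u i) = fscale (mu i) (u i)" if "i < n2" for i
    using that e2 o2 l2_mono matrix_op_union_block[OF fin(2,1) _ _, of "u i" M] disj cross
    by (auto simp: eigenbasis_def orthonormal_on_def Un_commute Int_commute)
  have ip_v: "inner_on (A1 \<union> A2) (v i) g = inner_on A1 (v i) g" if "i < n1" for i g
    using inner_on_superset[OF fU _ v(1)[OF that]] by simp
  have ip_u: "inner_on (A1 \<union> A2) (u i) g = inner_on A2 (u i) g" if "i < n2" for i g
    using inner_on_superset[OF fU _ u(1)[OF that]] by simp
  have ip_vu: "inner_on (A1 \<union> A2) (v i) (u j) = 0" "inner_on (A1 \<union> A2) (u j) (v i) = 0"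
    if "i < n1" "j < n2" for i j
    using inner_on_disjoint_supports[OF v(1)[OF that(1)] u(1)[OF that(2)] disj]
      inner_on_disjoint_supports[OF u(1)[OF that(2)] v(1)[OF that(1)]] disj by auto
  show ?thesis
    unfolding eigenbasis_def orthonormal_on_def
  proof (intro conjI allI impI)
    fix i assume "i < n1 + n2"
    then show "(if i < n1 then v i else u (i - n1)) \<in> l2 (A1 \<union> A2)"
      and "matrix_op (A1 \<union> A2) M (if i < n1 then v i else u (i - n1))
           = fscale (if i < n1 then lam i else mu (i - n1)) (if i < n1 then v i else u (i - n1))"
      using v u by auto
  next
    fix i j assume "i < n1 + n2" "j < n1 + n2"
    then show "inner_on (A1 \<union> A2) (if i < n1 then v i else u (i - n1))
        (if j < n1 then v j else u (j - n1))
        = (if i = j then 1 else 0)"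
      using o1 o2 ip_v ip_u ip_vu
      by (cases "i < n1"; cases "j < n1") (auto simp: orthonormal_on_def)
  qed
qed

lemma Ncount_union_block:
  assumes fin: "finite A1" "finite A2" and disj: "A1 \<inter> A2 = {}" and sym: "symmetric_on (A1 \<union> A2) M"
    and cross: "\<forall>x\<in>A1. \<forall>y\<in>A2. M x y = 0 \<and> M y x = 0"
  shows "Ncount E (A1 \<union> A2) (matrix_op (A1 \<union> A2) M)
    = Ncount E A1 (matrix_op A1 M) + Ncount E A2 (matrix_op A2 M)"
proof -
  let ?n1 = "card A1" and ?n2 = "card A2"
  have sym1: "symmetric_on A1 M" and sym2: "symmetric_on A2 M"
    using sym unfolding symmetric_on_def by auto
  obtain v lam where e1: "eigenbasis A1 M v lam ?n1" using eigenbasis_exists[OF fin(1) sym1] by blast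
  obtain u mu where e2: "eigenbasis A2 M u mu ?n2" using eigenbasis_exists[OF fin(2) sym2] by blast
  define lam' where "lam' = (\<lambda>i. if i < ?n1 then lam i else mu (i - ?n1))"
  have "card (A1 \<union> A2) = ?n1 + ?n2" using fin disj by (simp add: card_Un_disjoint)
  then have eU:
    "eigenbasis (A1 \<union> A2) M (\<lambda>i. if i < ?n1 then v i else u (i - ?n1)) lam' (card (A1 \<union> A2))"
    unfolding lam'_def using eigenbasis_union[OF fin disj cross e1 e2] by simp
  have "{i. i < card (A1 \<union> A2) \<and> lam' i \<le> E}
      = {i. i < ?n1 \<and> lam i \<le> E} \<union> (\<lambda>j. ?n1 + j) ` {j. j < ?n2 \<and> mu j \<le> E}"
  proof (rule set_eqI)
    fix i
    show "i \<in> {i. i < card (A1 \<union> A2) \<and> lam' i \<le> E} \<longleftrightarrow>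
      i \<in> {i. i < ?n1 \<and> lam i \<le> E} \<union> (\<lambda>j. ?n1 + j) ` {j. j < ?n2 \<and> mu j \<le> E}"
    proof (cases "i < ?n1")
      case False
      then obtain j where "i = ?n1 + j" by (metis le_iff_add not_less)
      then show ?thesis using \<open>card (A1 \<union> A2) = ?n1 + ?n2\<close> unfolding lam'_def by auto
    qed (use \<open>card (A1 \<union> A2) = ?n1 + ?n2\<close> in \<open>auto simp: lam'_def\<close>)
  qed
  moreover have "card ({i. i < ?n1 \<and> lam i \<le> E} \<union> (\<lambda>j. ?n1 + j) ` {j. j < ?n2 \<and> mu j \<le> E})
      = card {i. i < ?n1 \<and> lam i \<le> E} + card {j. j < ?n2 \<and> mu j \<le> E}"
    by (subst card_Un_disjoint) (auto simp: card_image)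
  ultimately show ?thesis
    using Ncount_eigenbasis[OF _ sym eU] Ncount_eigenbasis[OF fin(1) sym1 e1]
      Ncount_eigenbasis[OF fin(2) sym2 e2] fin by simp
qed

lemma Ncount_UN_blocks:
  assumes "finite K" "\<And>k. k \<in> K \<Longrightarrow> finite (C k)" "disjoint_family_on C K"
    and "symmetric_on (\<Union>k\<in>K. C k) M"
    and "\<And>i k. i \<in> K \<Longrightarrow> k \<in> K \<Longrightarrow> i \<noteq> k \<Longrightarrow> \<forall>x\<in>C i. \<forall>y\<in>C k. M x y = 0"
  shows "Ncount E (\<Union>k\<in>K. C k) (matrix_op (\<Union>k\<in>K. C k) M) = (\<Sum>k\<in>K. Ncount E (C k) (matrix_op (C k) M))"
  using assms
proof (induction K rule: finite_induct)
  case empty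
  have "Ncount E {} (matrix_op {} M) = 0"
    using Ncount_eigenbasis[of "{}" M] by (simp add: eigenbasis_def orthonormal_on_def symmetric_on_def)
  then show ?case by simp
next
  case (insert k K)
  have sym: "symmetric_on (C k \<union> (\<Union>i\<in>K. C i)) M" using insert.prems(3) by simp
  have "C k \<inter> (\<Union>i\<in>K. C i) = {}"
    using insert.prems(2) insert.hyps(2) by (fastforce simp: disjoint_family_on_def)
  moreover have "\<forall>x\<in>C k. \<forall>y\<in>(\<Union>i\<in>K. C i). M x y = 0 \<and> M y x = 0"
    using insert.prems(4) insert.hyps(2) by blast
  moreover have "Ncount E (\<Union>i\<in>K. C i) (matrix_op (\<Union>i\<in>K. C i) M)
    = (\<Sum>i\<in>K. Ncount E (C i) (matrix_op (C i) M))"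
  proof (rule insert.IH)
    show "\<forall>x\<in>C i. \<forall>y\<in>C j. M x y = 0" if "i \<in> K" "j \<in> K" "i \<noteq> j" for i j
      using insert.prems(4) that by blast
  qed (use insert.prems in \<open>auto simp: disjoint_family_on_def symmetric_on_def\<close>)
  ultimately show ?case
    using Ncount_union_block[OF _ _ _ sym] insert.prems(1) insert.hyps by simp
qed

lemma symmetric_on_subset: "symmetric_on B M \<Longrightarrow> A \<subseteq> B \<Longrightarrow> symmetric_on A M"
  unfolding symmetric_on_def by blast

lemma Ncount_decouple:
  assumes fB: "finite B" and fK: "finite K" and fA: "\<And>k. k \<in> K \<Longrightarrow> finite (A k)"
    and CA: "\<And>k. k \<in> K \<Longrightarrow> C k \<subseteq> A k" and CB: "\<And>k. k \<in> K \<Longrightarrow> C k \<subseteq> B"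
    and disj: "disjoint_family_on C K"
    and symB: "symmetric_on B M" and symA: "\<And>k. k \<in> K \<Longrightarrow> symmetric_on (A k) (Mk k)"
    and agree: "\<And>k x y. k \<in> K \<Longrightarrow> x \<in> C k \<Longrightarrow> y \<in> C k \<Longrightarrow> Mk k x y = M x y"
    and cross: "\<And>i k. i \<in> K \<Longrightarrow> k \<in> K \<Longrightarrow> i \<noteq> k \<Longrightarrow> \<forall>x\<in>C i. \<forall>y\<in>C k. M x y = 0"
  shows "Ncount E B (matrix_op B M)
           \<le> (\<Sum>k\<in>K. Ncount E (A k) (matrix_op (A k) (Mk k))) + card (B - (\<Union>k\<in>K. C k))"
    and "(\<Sum>k\<in>K. Ncount E (A k) (matrix_op (A k) (Mk k)))
           \<le> Ncount E B (matrix_op B M) + (\<Sum>k\<in>K. card (A k - C k))"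
proof -
  let ?C = "\<Union>k\<in>K. C k"
  have CB': "?C \<subseteq> B" using CB by blast
  have fC: "finite (C k)" if "k \<in> K" for k using fA[OF that] CA[OF that] finite_subset by blast
  have symC: "symmetric_on ?C M" by (rule symmetric_on_subset[OF symB CB'])
  have symCk: "symmetric_on (C k) M" if "k \<in> K" for k using symmetric_on_subset[OF symB] CB that
    by blast
  have blocks: "Ncount E ?C (matrix_op ?C M) = (\<Sum>k\<in>K. Ncount E (C k) (matrix_op (C k) M))"
    by (rule Ncount_UN_blocks[OF fK fC disj symC cross])
  have "Ncount E B (matrix_op B M) \<le> Ncount E ?C (matrix_op ?C M) + card (B - ?C)"
    using Ncount_le_if_agree[OF fB _ symB symC CB' order_refl] fB CB' finite_subset by blast
  also have "Ncount E ?C (matrix_op ?C M) \<le> (\<Sum>k\<in>K. Ncount E (A k) (matrix_op (A k) (Mk k)))"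
    unfolding blocks
    using Ncount_le_if_agree[OF fC fA symCk symA order_refl CA] agree by (intro sum_mono) simp
  finally show "Ncount E B (matrix_op B M)
      \<le> (\<Sum>k\<in>K. Ncount E (A k) (matrix_op (A k) (Mk k))) + card (B - ?C)" by simp
  have "(\<Sum>k\<in>K. Ncount E (A k) (matrix_op (A k) (Mk k)))
      \<le> (\<Sum>k\<in>K. Ncount E (C k) (matrix_op (C k) M) + card (A k - C k))"
    using Ncount_le_if_agree[OF fA fC symA symCk CA order_refl] agree by (intro sum_mono) simp
  also have "\<dots> = Ncount E ?C (matrix_op ?C M) + (\<Sum>k\<in>K. card (A k - C k))"
    unfolding blocks sum.distrib ..
  also have "Ncount E ?C (matrix_op ?C M) \<le> Ncount E B (matrix_op B M)"
    using Ncount_le_if_agree[OF _ fB symC symB order_refl CB'] fB CB' finite_subset by fastforce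
  finally show "(\<Sum>k\<in>K. Ncount E (A k) (matrix_op (A k) (Mk k)))
      \<le> Ncount E B (matrix_op B M) + (\<Sum>k\<in>K. card (A k - C k))" by simp
qed

section \<open>Integer coordinates on the Sierpinski lattice\<close>

text \<open>\<open>lattice_point (i, j) = i a2 + j a3\<close>; the sets with suffix \<open>Z\<close> are the coordinate versions
  of the corresponding sets of points.\<close>
definition lattice_point :: "int \<times> int \<Rightarrow> pt" where
  "lattice_point p = (real_of_int (fst p) + real_of_int (snd p) / 2, real_of_int (snd p) * sqrt 3 / 2)"

lemma inj_lattice_point: "inj lattice_point"
proof (rule injI)
  fix p q assume e: "lattice_point p = lattice_point q"
  have s3: "sqrt 3 \<noteq> (0::real)" by simp
  from e have "real_of_int (snd p) * sqrt 3 / 2 = real_of_int (snd q) * sqrt 3 / 2"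
    unfolding lattice_point_def by simp
  then have "snd p = snd q" using s3 by simp
  moreover from e have "real_of_int (fst p) + real_of_int (snd p) / 2
    = real_of_int (fst q) + real_of_int (snd q) / 2"
    unfolding lattice_point_def by simp
  ultimately show "p = q" by (simp add: prod_eq_iff)
qed

lemma lattice_point_eq_iff [simp]: "lattice_point p = lattice_point q \<longleftrightarrow> p = q"
  using inj_lattice_point by (auto dest: injD)

lemma card_lattice_point_image_diff: "card (lattice_point ` X - lattice_point ` Y) = card (X - Y)"
  by (simp add: image_set_diff[OF inj_lattice_point, symmetric] card_image
      inj_on_subset[OF inj_lattice_point])

lemma lattice_point_add: "lattice_point p + lattice_point q
  = lattice_point (fst p + fst q, snd p + snd q)"
  unfolding lattice_point_def by (simp add: field_simps)

lemma lattice_point_zero: "lattice_point (0,0) = 0" unfolding lattice_point_def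
  by (simp add: zero_prod_def)

lemma lattice_point_shift_a2: "lattice_point p + (2::real)^n *\<^sub>R a2
  = lattice_point (fst p + 2^n, snd p)"
  unfolding lattice_point_def a2_def by simp

lemma lattice_point_shift_a3: "lattice_point p + (2::real)^n *\<^sub>R a3
  = lattice_point (fst p, snd p + 2^n)"
  unfolding lattice_point_def a3_def by (simp add: field_simps)

fun cornersZ :: "nat \<Rightarrow> (int \<times> int) set" where
  "cornersZ 0 = {(0,0)}"
| "cornersZ (Suc n) = cornersZ n \<union> (\<lambda>p. (fst p + 2^n, snd p)) ` cornersZ n
    \<union> (\<lambda>p. (fst p, snd p + 2^n)) ` cornersZ n"

definition triZ :: "int \<times> int \<Rightarrow> (int \<times> int) set" where
  "triZ c = {c, (fst c + 1, snd c), (fst c, snd c + 1)}"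

definition mirrorZ :: "int \<times> int \<Rightarrow> int \<times> int" where
  "mirrorZ p = (- fst p - snd p, snd p)"

definition GnZ :: "nat \<Rightarrow> (int \<times> int) set" where
  "GnZ n = (\<Union>c\<in>cornersZ n. triZ c)"

definition extremeZ :: "nat \<Rightarrow> (int \<times> int) set" where
  "extremeZ L = {(0,0), (2^L, 0), (0, 2^L)}"

definition domZ :: "nat \<Rightarrow> bool \<Rightarrow> (int \<times> int) set" where
  "domZ L t = (if t then GnZ L - extremeZ L else GnZ L)"

lemma finite_cornersZ: "finite (cornersZ n)" by (induction n) auto

lemma finite_GnZ: "finite (GnZ n)" unfolding GnZ_def triZ_def using finite_cornersZ by auto

lemma finite_domZ: "finite (domZ L t)" unfolding domZ_def using finite_GnZ by auto

lemma corners_eq_cornersZ: "corners n = lattice_point ` cornersZ n"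
proof (induction n)
  case 0 then show ?case by (simp add: a1_def lattice_point_def zero_prod_def)
next
  case (Suc n)
  have 2: "(\<lambda>c. c + (2::real)^n *\<^sub>R a2) ` lattice_point ` cornersZ n
    = lattice_point ` (\<lambda>p. (fst p + 2^n, snd p)) ` cornersZ n"
    by (simp add: image_image lattice_point_shift_a2)
  have 3: "(\<lambda>c. c + (2::real)^n *\<^sub>R a3) ` lattice_point ` cornersZ n
    = lattice_point ` (\<lambda>p. (fst p, snd p + 2^n)) ` cornersZ n"
    by (simp add: image_image lattice_point_shift_a3)
  show ?case using Suc by (simp add: 2 3 image_Un)
qed

lemma tri_lattice_point: "tri (lattice_point c) = lattice_point ` triZ c"
  unfolding tri_def triZ_def lattice_point_def a1_def a2_def a3_def by (simp add: field_simps)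

lemma mirror_lattice_point: "mirror (lattice_point p) = lattice_point (mirrorZ p)"
  unfolding mirror_def mirrorZ_def lattice_point_def by (simp add: field_simps)

lemma Gn_eq_GnZ: "Gn n = lattice_point ` GnZ n"
  unfolding Gn_def GnZ_def corners_eq_cornersZ by (auto simp: tri_lattice_point)

lemma extreme_eq_extremeZ: "extreme L = lattice_point ` extremeZ L"
  unfolding extreme_def extremeZ_def lattice_point_def a1_def a2_def a3_def by (auto simp: field_simps)

lemma Gtil_eq_GnZ: "Gtil L = lattice_point ` (GnZ L - extremeZ L)"
  unfolding Gtil_def Gn_eq_GnZ extreme_eq_extremeZ by (simp add: image_set_diff[OF inj_lattice_point])

lemma dom_L_eq_domZ: "dom_L L t = lattice_point ` domZ L t"
  unfolding dom_L_def domZ_def by (simp add: Gtil_eq_GnZ Gn_eq_GnZ)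

lemma SG_subset_lattice: "SG \<subseteq> range lattice_point"
  unfolding SG_def Gn_eq_GnZ by (auto simp: mirror_lattice_point)

lemma adj_lattice_points: "adj x y \<Longrightarrow> x \<in> range lattice_point \<and> y \<in> range lattice_point"
  unfolding adj_def using SG_subset_lattice by blast

lemma adj_sym: "adj x y \<longleftrightarrow> adj y x"
  unfolding adj_def by blast

lemma adj_lattice_cases:
  assumes "adj (lattice_point p) (lattice_point q)"
  shows "p \<noteq> q \<and> (\<exists>n c. c \<in> cornersZ n \<and> ((p \<in> triZ c \<and> q \<in> triZ c)
    \<or> (p \<in> mirrorZ ` triZ c \<and> q \<in> mirrorZ ` triZ c)))"
proof -
  from assms have pq: "p \<noteq> q" unfolding adj_def by auto
  from assms obtain t where t: "t \<in> unit_tris" "lattice_point p \<in> t" "lattice_point q \<in> t"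
    unfolding adj_def by auto
  from t(1) show ?thesis
    unfolding unit_tris_def
  proof (elim UnE CollectE exE conjE)
    fix c n assume tc: "t = tri c" "c \<in> corners n"
    then obtain c' where c': "c = lattice_point c'" "c' \<in> cornersZ n"
      unfolding corners_eq_cornersZ by auto
    then have "p \<in> triZ c'" "q \<in> triZ c'" using t tc by (auto simp: tri_lattice_point)
    then show ?thesis using pq c' by blast
  next
    fix c n assume tc: "t = mirror ` tri c" "c \<in> corners n"
    then obtain c' where c': "c = lattice_point c'" "c' \<in> cornersZ n"
      unfolding corners_eq_cornersZ by auto
    have "t = lattice_point ` mirrorZ ` triZ c'" using tc c'
      by (simp add: tri_lattice_point mirror_lattice_point image_image)
    then have "p \<in> mirrorZ ` triZ c'" "q \<in> mirrorZ ` triZ c'" using t by auto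
    then show ?thesis using pq c' by blast
  qed
qed

definition lattice_dirs :: "(int \<times> int) list" where
  "lattice_dirs = [(1,0), (-1,0), (0,1), (0,-1), (1,-1), (-1,1)]"

definition lattice_adj :: "int \<times> int \<Rightarrow> int \<times> int \<Rightarrow> bool" where
  "lattice_adj p q \<longleftrightarrow> (fst q - fst p, snd q - snd p) \<in> set lattice_dirs"

lemma lattice_adj_triZ: assumes "p \<in> triZ c" "q \<in> triZ c" "p \<noteq> q" shows "lattice_adj p q"
proof -
  obtain a b where c: "c = (a, b)" by (cases c)
  have p: "p = (a,b) \<or> p = (a+1,b) \<or> p = (a,b+1)" using assms(1) unfolding triZ_def c by simp
  have q: "q = (a,b) \<or> q = (a+1,b) \<or> q = (a,b+1)" using assms(2) unfolding triZ_def c by simp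
  from p q assms(3) show ?thesis unfolding lattice_adj_def lattice_dirs_def by (elim disjE) simp_all
qed

lemma lattice_adj_mirror_triZ:
  assumes "p \<in> mirrorZ ` triZ c" "q \<in> mirrorZ ` triZ c" "p \<noteq> q"
  shows "lattice_adj p q"
proof -
  obtain a b where c: "c = (a, b)" by (cases c)
  have p: "p = (-a-b,b) \<or> p = (-a-b-1,b) \<or> p = (-a-b-1,b+1)"
    using assms(1) unfolding triZ_def c mirrorZ_def by auto
  have q: "q = (-a-b,b) \<or> q = (-a-b-1,b) \<or> q = (-a-b-1,b+1)"
    using assms(2) unfolding triZ_def c mirrorZ_def by auto
  from p q assms(3) show ?thesis unfolding lattice_adj_def lattice_dirs_def by (elim disjE) simp_all
qed

lemma adj_imp_lattice_adj: assumes "adj (lattice_point p) (lattice_point q)" shows "lattice_adj p q"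
proof -
  from adj_lattice_cases[OF assms] obtain n c where pq: "p \<noteq> q"
    and c: "(p \<in> triZ c \<and> q \<in> triZ c) \<or> (p \<in> mirrorZ ` triZ c \<and> q \<in> mirrorZ ` triZ c)" by blast
  from c show ?thesis using lattice_adj_triZ lattice_adj_mirror_triZ pq by blast
qed

definition lattice_nbrs :: "int \<times> int \<Rightarrow> (int \<times> int) list" where
  "lattice_nbrs q = map (\<lambda>d. (fst q - fst d, snd q - snd d)) lattice_dirs"

lemma lattice_adj_lattice_nbrs:
  assumes "lattice_adj p q"
  shows "p \<in> set (lattice_nbrs q)"
proof -
  have "p = (\<lambda>d. (fst q - fst d, snd q - snd d)) (fst q - fst p, snd q - snd p)" by simp
  then show ?thesis using assms unfolding lattice_adj_def lattice_nbrs_def set_map by (rule image_eqI)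
qed

lemma cornersZ_bound: "c \<in> cornersZ n \<Longrightarrow> 0 \<le> fst c \<and> 0 \<le> snd c \<and> fst c + snd c \<le> 2^n - 1"
proof (induction n arbitrary: c)
  case 0 then show ?case by simp
next
  case (Suc n)
  have p: "(2::int)^Suc n = 2 * 2^n" by simp
  have pos: "(0::int) < 2^n" by simp
  from Suc.prems have "c \<in> cornersZ n \<or> (\<exists>c'\<in>cornersZ n. c
    = (fst c' + 2^n, snd c')) \<or> (\<exists>c'\<in>cornersZ n. c = (fst c', snd c' + 2^n))"
    by auto
  then show ?case
  proof (elim disjE bexE)
    assume "c \<in> cornersZ n" then show ?thesis using Suc.IH pos unfolding p by fastforce
  next
    fix c' assume "c' \<in> cornersZ n" "c = (fst c' + 2^n, snd c')"
    then show ?thesis using Suc.IH[of c'] pos unfolding p by simp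
  next
    fix c' assume "c' \<in> cornersZ n" "c = (fst c', snd c' + 2^n)"
    then show ?thesis using Suc.IH[of c'] pos unfolding p by simp
  qed
qed

lemma cornersZ_mono: "n \<le> m \<Longrightarrow> cornersZ n \<subseteq> cornersZ m"
  by (induction m) (auto simp: le_Suc_eq)

lemma cornersZ_add_decomp:
  "c \<in> cornersZ (a + b) \<Longrightarrow> \<exists>c0\<in>cornersZ a. \<exists>d\<in>cornersZ b. c
    = (fst c0 + 2^a * fst d, snd c0 + 2^a * snd d)"
proof (induction b arbitrary: c)
  case 0 then show ?case by (intro bexI[of _ c] bexI[of _ "(0,0)"]) auto
next
  case (Suc b)
  have pw: "(2::int)^(a + b) = 2^a * 2^b" by (simp add: power_add)
  from Suc.prems have "c \<in> cornersZ (a + b) \<or> c \<in> (\<lambda>p. (fst p + 2^(a+b), snd p)) ` cornersZ (a + b)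
       \<or> c \<in> (\<lambda>p. (fst p, snd p + 2^(a+b))) ` cornersZ (a + b)" by simp
  then show ?case
  proof (elim disjE)
    assume "c \<in> cornersZ (a + b)"
    then obtain c0 d where "c0 \<in> cornersZ a" "d \<in> cornersZ b" "c
      = (fst c0 + 2^a * fst d, snd c0 + 2^a * snd d)"
      using Suc.IH by blast
    then show ?thesis by (intro bexI[of _ c0] bexI[of _ d]) auto
  next
    assume "c \<in> (\<lambda>p. (fst p + 2^(a+b), snd p)) ` cornersZ (a + b)"
    then obtain c' where c': "c' \<in> cornersZ (a + b)" "c = (fst c' + 2^(a+b), snd c')" by auto
    then obtain c0 d where "c0 \<in> cornersZ a" "d \<in> cornersZ b" "c'
      = (fst c0 + 2^a * fst d, snd c0 + 2^a * snd d)"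
      using Suc.IH by blast
    then show ?thesis using c'(2)
      by (intro bexI[of _ c0] bexI[of _ "(fst d + 2^b, snd d)"]) (auto simp: pw algebra_simps)
  next
    assume "c \<in> (\<lambda>p. (fst p, snd p + 2^(a+b))) ` cornersZ (a + b)"
    then obtain c' where c': "c' \<in> cornersZ (a + b)" "c = (fst c', snd c' + 2^(a+b))" by auto
    then obtain c0 d where "c0 \<in> cornersZ a" "d \<in> cornersZ b" "c'
      = (fst c0 + 2^a * fst d, snd c0 + 2^a * snd d)"
      using Suc.IH by blast
    then show ?thesis using c'(2)
      by (intro bexI[of _ c0] bexI[of _ "(fst d, snd d + 2^b)"]) (auto simp: pw algebra_simps)
  qed
qed

definition regionZ :: "nat \<Rightarrow> (int \<times> int) set" where
  "regionZ L = {p. 0 \<le> fst p \<and> 0 \<le> snd p \<and> fst p + snd p \<le> 2^L}"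

lemma GnZ_subset_regionZ: "GnZ n \<subseteq> regionZ n"
  unfolding GnZ_def regionZ_def triZ_def using cornersZ_bound by fastforce

lemma triZ_offset_meets_regionZ:
  fixes c0 d q :: "int \<times> int"
  assumes c0: "0 \<le> fst c0" "0 \<le> snd c0" and d: "0 \<le> fst d" "0 \<le> snd d" "d \<noteq> (0,0)"
    and q: "q \<in> triZ (fst c0 + 2^L * fst d, snd c0 + 2^L * snd d)" "q \<in> regionZ L"
  shows "q = (2^L * fst d, 2^L * snd d) \<and> fst d + snd d = 1"
proof -
  define H :: int where "H = 2^L"
  have H: "H > 0" unfolding H_def by simp
  have d1: "fst d + snd d \<ge> 1" using d by (cases d) auto
  then have Hd: "H * fst d + H * snd d \<ge> H * 1" unfolding distrib_left[symmetric] using H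
    by (intro mult_left_mono) auto
  have qs: "fst q + snd q \<le> H" using q(2) unfolding regionZ_def H_def by auto
  have qc: "q = (fst c0 + H * fst d, snd c0 + H * snd d) \<or> q
    = (fst c0 + H * fst d + 1, snd c0 + H * snd d)
      \<or> q = (fst c0 + H * fst d, snd c0 + H * snd d + 1)"
    using q(1) unfolding triZ_def H_def by auto
  have "\<not> fst d + snd d \<ge> 2"
  proof
    assume "fst d + snd d \<ge> 2"
    then have "H * fst d + H * snd d \<ge> H * 2" unfolding distrib_left[symmetric] using H
      by (intro mult_left_mono) auto
    then show False using qc qs c0 H by auto
  qed
  then show ?thesis using qc qs c0 d1 Hd H by (auto simp: H_def prod_eq_iff)
qed

lemma triZ_off_level_meets_regionZ:
  assumes c: "c \<in> cornersZ n" and p: "p \<in> triZ c" "p \<in> regionZ L" and nc: "c \<notin> cornersZ L"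
  shows "(p = (2^L, 0) \<or> p = (0, 2^L)) \<and> (\<forall>q\<in>triZ c. q \<in> regionZ L \<longrightarrow> q = p)"
proof -
  have "\<not> n \<le> L" using c nc cornersZ_mono by blast
  then obtain b where n: "n = L + b" by (metis le_iff_add nat_le_linear)
  from cornersZ_add_decomp[of c L b] c n obtain c0 d where c0: "c0 \<in> cornersZ L" and d: "d \<in> cornersZ b"
    and c_eq: "c = (fst c0 + 2^L * fst d, snd c0 + 2^L * snd d)" by blast
  have "d \<noteq> (0,0)" using c_eq c0 nc by auto
  then have meets: "q = (2^L * fst d, 2^L * snd d) \<and> fst d + snd d = 1"
    if "q \<in> triZ c" "q \<in> regionZ L" for q
    using triZ_offset_meets_regionZ[of c0 d q L] cornersZ_bound[OF c0] cornersZ_bound[OF d] that c_eq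
    by auto
  from meets[OF p] have "d = (1,0) \<or> d = (0,1)" using cornersZ_bound[OF d] by (cases d) auto
  then show ?thesis using meets meets[OF p] by auto
qed

lemma mirror_triZ_meets_regionZ:
  assumes c: "c \<in> cornersZ n" and p: "p \<in> mirrorZ ` triZ c" "p \<in> regionZ L"
  shows "p = (0,0)"
proof -
  from p(1) obtain r where r: "r \<in> triZ c" "p = mirrorZ r" by auto
  have "0 \<le> fst r" "0 \<le> snd r" using cornersZ_bound[OF c] r(1) unfolding triZ_def by auto
  then show ?thesis using r(2) p(2) unfolding mirrorZ_def regionZ_def by (auto simp: prod_eq_iff)
qed

text \<open>A unit triangle of a higher level (or a mirrored one) meets the region of \<open>G_L\<close> in at most an
  extreme vertex, so adjacency inside the region is adjacency inside a unit triangle of \<open>G_L\<close>.\<close>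
lemma adj_regionZ_cases:
  assumes p: "p \<in> regionZ L" and a: "adj (lattice_point p) (lattice_point q)"
  shows "(\<exists>c\<in>cornersZ L. p \<in> triZ c \<and> q \<in> triZ c) \<or> (p \<in> extremeZ L \<and> q \<notin> regionZ L)"
proof -
  from adj_lattice_cases[OF a] obtain n c where pq: "p \<noteq> q" and c: "c \<in> cornersZ n"
    and cs: "(p \<in> triZ c \<and> q \<in> triZ c) \<or> (p \<in> mirrorZ ` triZ c \<and> q \<in> mirrorZ ` triZ c)" by blast
  from cs show ?thesis
  proof
    assume pq': "p \<in> triZ c \<and> q \<in> triZ c"
    show ?thesis
    proof (cases "c \<in> cornersZ L")
      case False
      from triZ_off_level_meets_regionZ[OF c _ p False] pq' pq show ?thesis
        unfolding extremeZ_def by blast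
    qed (use pq' in blast)
  next
    assume "p \<in> mirrorZ ` triZ c \<and> q \<in> mirrorZ ` triZ c"
    then have "p = (0,0)" "q \<notin> regionZ L"
      using mirror_triZ_meets_regionZ[OF c _ p] mirror_triZ_meets_regionZ[OF c, of q L] pq by auto
    then show ?thesis unfolding extremeZ_def by blast
  qed
qed

section \<open>The operators as symmetric matrices\<close>

definition bc_coef :: "pt set \<Rightarrow> bc \<Rightarrow> pt \<Rightarrow> real" where
  "bc_coef A b x =
    (case b of S \<Rightarrow> real (deg x) | N \<Rightarrow> real (degA A x) | D \<Rightarrow> 2 * real (deg x) - real (degA A x))"

definition Hmat :: "pt set \<Rightarrow> bc \<Rightarrow> (pt \<Rightarrow> real) \<Rightarrow> pt \<Rightarrow> pt \<Rightarrow> real" where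
  "Hmat A b V x y = (if x = y then bc_coef A b x + V x else 0) - (if adj y x then 1 else 0)"

lemma Hop_eq_matrix_op:
  assumes fA: "finite A"
  shows "Hop A b V = matrix_op A (Hmat A b V)"
proof (intro ext)
  fix f x
  show "Hop A b V f x = matrix_op A (Hmat A b V) f x"
  proof (cases "x \<in> A")
    case True
    have "(\<Sum>y\<in>A. Hmat A b V x y * f y)
        = (\<Sum>y\<in>A. (if x = y then (bc_coef A b x + V x) * f y else 0))
          - (\<Sum>y\<in>A. (if adj y x then f y else 0))"
      unfolding Hmat_def
      by (simp add: sum_subtractf[symmetric] left_diff_distrib if_distrib[of "\<lambda>z. z * f _"]
          cong: if_cong)
    also have "\<dots> = (bc_coef A b x + V x) * f x - (\<Sum>y\<in>{y \<in> A. adj y x}. f y)"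
      using True fA by (simp add: sum.delta sum.inter_filter)
    finally show ?thesis using True unfolding Hop_def matrix_op_def bc_coef_def
      by (simp add: algebra_simps split: bc.splits)
  qed (simp add: Hop_def matrix_op_def)
qed

lemma symmetric_Hmat: "symmetric_on X (Hmat A b V)"
  unfolding symmetric_on_def Hmat_def using adj_sym by auto

lemma Hmat_eq_if_nbrs_eq:
  assumes "{z \<in> A. adj x z} = {z \<in> B. adj x z}"
  shows "Hmat A b V x y = Hmat B b V x y"
proof -
  have "bc_coef A b x = bc_coef B b x" unfolding bc_coef_def degA_def by (simp only: assms)
  then show ?thesis unfolding Hmat_def by (cases "x = y") simp_all
qed

text \<open>At a point whose neighbours all lie in \<open>A\<close>, all three boundary conditions give the diagonal
  entry \<open>deg x\<close>.\<close>
lemma Hmat_eq_if_nbrs_inside: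
  assumes "{z. adj x z} \<subseteq> A" "{z. adj x z} \<subseteq> B"
  shows "Hmat A b V x y = Hmat B b' V x y"
proof -
  have "{z \<in> A. adj x z} = {z. adj x z}" "{z \<in> B. adj x z} = {z. adj x z}" using assms by blast+
  then have "bc_coef A b x = bc_coef B b' x" unfolding bc_coef_def degA_def deg_def
    by (simp split: bc.splits)
  then show ?thesis unfolding Hmat_def by (cases "x = y") simp_all
qed

definition extreme_nbhd :: "nat \<Rightarrow> (int \<times> int) list" where
  "extreme_nbhd L = [(0,0), (2^L,0), (0,2^L), (1,0), (0,1), (2^L-1,0), (2^L-1,1), (0,2^L-1), (1,2^L-1)]"

lemma extremeZ_subset_extreme_nbhd: "extremeZ L \<subseteq> set (extreme_nbhd L)"
  unfolding extremeZ_def extreme_nbhd_def by auto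

lemma lattice_adj_extremeZ:
  assumes "q \<in> extremeZ L" "lattice_adj p q" "p \<in> regionZ L"
  shows "p \<in> set (extreme_nbhd L)"
proof -
  define H :: int where "H = 2^L"
  have H: "H \<ge> 1" unfolding H_def by simp
  have q: "q = (0,0) \<or> q = (H,0) \<or> q = (0,H)" using assms(1) unfolding extremeZ_def H_def by auto
  obtain a b where p: "p = (a,b)" by (cases p)
  have r: "0 \<le> a" "0 \<le> b" "a + b \<le> H" using assms(3) unfolding regionZ_def p H_def by auto
  have d: "(fst q - a, snd q - b) \<in> {(1,0),(-1,0),(0,1),(0,-1),(1,-1),(-1,1)}"
    using assms(2) unfolding lattice_adj_def lattice_dirs_def p by simp
  have "p = (1,0) \<or> p = (0,1) \<or> p = (H-1,0) \<or> p = (H-1,1) \<or> p = (0,H-1) \<or> p = (1,H-1)"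
    using q d r H unfolding p by (elim disjE) auto
  then show ?thesis unfolding extreme_nbhd_def H_def by auto
qed

definition coreZ :: "nat \<Rightarrow> (int \<times> int) set" where
  "coreZ L = GnZ L - set (extreme_nbhd L)"

lemma adj_coreZ_in_Gtil:
  assumes p: "p \<in> coreZ L" and a: "adj (lattice_point p) y"
  shows "y \<in> Gtil L"
proof -
  obtain q where y: "y = lattice_point q" using adj_lattice_points[OF a] by auto
  have pR: "p \<in> regionZ L" using p GnZ_subset_regionZ unfolding coreZ_def by auto
  have pE: "p \<notin> extremeZ L" using p extremeZ_subset_extreme_nbhd unfolding coreZ_def by auto
  from adj_regionZ_cases[OF pR a[unfolded y]] pE obtain c where c: "c \<in> cornersZ L" "q \<in> triZ c"
    by blast
  have qG: "q \<in> GnZ L" using c unfolding GnZ_def by auto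
  have "q \<notin> extremeZ L"
  proof
    assume "q \<in> extremeZ L"
    from lattice_adj_extremeZ[OF this adj_imp_lattice_adj[OF a[unfolded y]] pR] p show False
      unfolding coreZ_def by auto
  qed
  then show ?thesis using qG y unfolding Gtil_eq_GnZ by auto
qed

lemma coreZ_subset_domZ: "coreZ L \<subseteq> domZ L t"
  unfolding coreZ_def domZ_def using extremeZ_subset_extreme_nbhd by auto

lemma card_domZ_diff_coreZ: "card (domZ L t - coreZ L) \<le> 9"
proof -
  have "card (domZ L t - coreZ L) \<le> card (set (extreme_nbhd L))"
    unfolding domZ_def coreZ_def by (intro card_mono) auto
  also have "\<dots> \<le> length (extreme_nbhd L)" by (rule card_length)
  finally show ?thesis unfolding extreme_nbhd_def by simp
qed

lemma Ncount_dom_L_le: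
  "Ncount E (dom_L L t1) (Hop (dom_L L t1) b1 V) \<le> Ncount E (dom_L L t2) (Hop (dom_L L t2) b2 V) + 9"
proof -
  let ?A1 = "lattice_point ` domZ L t1" and ?A2 = "lattice_point ` domZ L t2"
    and ?C = "lattice_point ` coreZ L"
  have f1: "finite ?A1" and f2: "finite ?A2" using finite_domZ by auto
  have "Gtil L \<subseteq> lattice_point ` domZ L t" for t unfolding Gtil_eq_GnZ domZ_def by auto
  then have "Hmat ?A1 b1 V x y = Hmat ?A2 b2 V x y" if "x \<in> ?C" for x y
    using that adj_coreZ_in_Gtil by (intro Hmat_eq_if_nbrs_inside) blast+
  then have "Ncount E ?A1 (matrix_op ?A1 (Hmat ?A1 b1 V))
      \<le> Ncount E ?A2 (matrix_op ?A2 (Hmat ?A2 b2 V)) + card (?A1 - ?C)"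
    using coreZ_subset_domZ by (intro Ncount_le_if_agree[OF f1 f2 symmetric_Hmat symmetric_Hmat]) blast+
  also have "card (?A1 - ?C) \<le> 9"
    using card_domZ_diff_coreZ[of L t1] by (simp add: card_lattice_point_image_diff)
  finally show ?thesis unfolding dom_L_eq_domZ Hop_eq_matrix_op[OF f1] Hop_eq_matrix_op[OF f2] by simp
qed

section \<open>Subdivision into three subtriangles\<close>

definition translateZ :: "int \<times> int \<Rightarrow> int \<times> int \<Rightarrow> int \<times> int" where
  "translateZ s p = (fst p + fst s, snd p + snd s)"

definition shiftZ :: "nat \<Rightarrow> nat \<Rightarrow> int \<times> int" where
  "shiftZ m k = (if k = 1 then (0,0) else if k = 2 then (2^m, 0) else (0, 2^m))"

definition pieceZ :: "nat \<Rightarrow> nat \<Rightarrow> (int \<times> int) set" where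
  "pieceZ m k = translateZ (shiftZ m k) ` GnZ m"

definition subdomZ :: "nat \<Rightarrow> bool \<Rightarrow> nat \<Rightarrow> (int \<times> int) set" where
  "subdomZ m t k = translateZ (shiftZ m k) ` domZ m t"

definition junctionsZ :: "nat \<Rightarrow> (int \<times> int) set" where
  "junctionsZ m = {(2^m,0), (0,2^m), (2^m,2^m)}"

definition piece_regionZ :: "nat \<Rightarrow> nat \<Rightarrow> (int \<times> int) set" where
  "piece_regionZ m k = (if k = 1 then {p. 0 \<le> fst p \<and> 0 \<le> snd p \<and> fst p + snd p \<le> 2^m}
     else if k = 2 then {p. 2^m \<le> fst p \<and> 0 \<le> snd p \<and> fst p + snd p \<le> 2 * 2^m}
     else {p. 0 \<le> fst p \<and> 2^m \<le> snd p \<and> fst p + snd p \<le> 2 * 2^m})"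

lemma finite_subdomZ: "finite (subdomZ m t k)" unfolding subdomZ_def using finite_domZ by auto

lemma subdom_eq_subdomZ:
  assumes "k \<in> {1,2,3}"
  shows "subdom (Suc m) t k = lattice_point ` subdomZ m t k"
proof -
  have "shift (Suc m) k = lattice_point (shiftZ m k)"
    using assms lattice_point_shift_a2[of "(0,0)" m] lattice_point_shift_a3[of "(0,0)" m]
    unfolding shift_def shiftZ_def by (auto simp: lattice_point_zero)
  then show ?thesis
    unfolding subdom_def subdomZ_def dom_L_eq_domZ by (simp add: image_image lattice_point_add
      translateZ_def)
qed

lemma triZ_translateZ: "triZ (translateZ s c) = translateZ s ` triZ c"
  unfolding triZ_def translateZ_def by auto

lemma triZ_Suc_subset_pieceZ:
  assumes "c \<in> cornersZ (Suc m)"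
  shows "\<exists>k\<in>{1,2,3}. triZ c \<subseteq> pieceZ m k"
proof -
  have tr1: "translateZ (shiftZ m 1) = id" unfolding shiftZ_def translateZ_def
    by (auto simp: fun_eq_iff)
  from assms have "c \<in> cornersZ m \<or> c \<in> translateZ (shiftZ m 2) ` cornersZ m
    \<or> c \<in> translateZ (shiftZ m 3) ` cornersZ m"
    unfolding shiftZ_def translateZ_def by auto
  then show ?thesis
  proof (elim disjE)
    assume "c \<in> cornersZ m"
    then have "triZ c \<subseteq> pieceZ m 1" unfolding pieceZ_def GnZ_def tr1 by auto
    then show ?thesis by blast
  next
    assume "c \<in> translateZ (shiftZ m 2) ` cornersZ m"
    then obtain c0 where "c0 \<in> cornersZ m" "c = translateZ (shiftZ m 2) c0" by auto
    then have "triZ c \<subseteq> pieceZ m 2" unfolding pieceZ_def GnZ_def by (auto simp: triZ_translateZ)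
    then show ?thesis by blast
  next
    assume "c \<in> translateZ (shiftZ m 3) ` cornersZ m"
    then obtain c0 where "c0 \<in> cornersZ m" "c = translateZ (shiftZ m 3) c0" by auto
    then have "triZ c \<subseteq> pieceZ m 3" unfolding pieceZ_def GnZ_def by (auto simp: triZ_translateZ)
    then show ?thesis by blast
  qed
qed

lemma GnZ_Suc_cover: "p \<in> GnZ (Suc m) \<Longrightarrow> \<exists>k\<in>{1,2,3}. p \<in> pieceZ m k"
  unfolding GnZ_def using triZ_Suc_subset_pieceZ by blast

lemma pieceZ_subset_GnZ_Suc: "k \<in> {1,2,3} \<Longrightarrow> pieceZ m k \<subseteq> GnZ (Suc m)"
proof -
  assume k: "k \<in> {1,2,3}"
  have tr1: "translateZ (shiftZ m 1) = id" unfolding shiftZ_def translateZ_def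
    by (auto simp: fun_eq_iff)
  show ?thesis
  proof
    fix p assume "p \<in> pieceZ m k"
    then obtain c r where c: "c \<in> cornersZ m" "r \<in> triZ c" "p = translateZ (shiftZ m k) r"
      unfolding pieceZ_def GnZ_def by auto
    have "translateZ (shiftZ m k) c \<in> cornersZ (Suc m)"
      using k c(1) unfolding shiftZ_def translateZ_def by auto
    moreover have "p \<in> triZ (translateZ (shiftZ m k) c)" using c unfolding triZ_translateZ by auto
    ultimately show "p \<in> GnZ (Suc m)" unfolding GnZ_def by blast
  qed
qed

lemma pieceZ_subset_piece_regionZ: "k \<in> {1,2,3} \<Longrightarrow> pieceZ m k \<subseteq> piece_regionZ m k"
proof -
  assume k: "k \<in> {1,2,3}"
  show ?thesis
  proof
    fix p assume "p \<in> pieceZ m k"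
    then obtain r where r: "r \<in> GnZ m" "p = translateZ (shiftZ m k) r" unfolding pieceZ_def by auto
    have "r \<in> regionZ m" using r GnZ_subset_regionZ by auto
    then show "p \<in> piece_regionZ m k" using k r(2) unfolding regionZ_def piece_regionZ_def
      translateZ_def shiftZ_def by auto
  qed
qed

lemma piece_regionZ_inter:
  assumes "i \<in> {1,2,3}" "k \<in> {1,2,3}" "i \<noteq> k" "p \<in> piece_regionZ m i" "p \<in> piece_regionZ m k"
  shows "p \<in> junctionsZ m"
  using assms by (cases p) (auto simp: piece_regionZ_def junctionsZ_def)

lemma pieceZ_inter:
  assumes "i \<in> {1,2,3}" "k \<in> {1,2,3}" "i \<noteq> k" "p \<in> pieceZ m i" "p \<in> pieceZ m k"
  shows "p \<in> junctionsZ m"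
  using assms pieceZ_subset_piece_regionZ[OF assms(1)] pieceZ_subset_piece_regionZ[OF assms(2)]
  by (intro piece_regionZ_inter[OF assms(1-3)]) blast+

lemma subdomZ_subset_pieceZ: "subdomZ m t k \<subseteq> pieceZ m k"
  unfolding subdomZ_def pieceZ_def domZ_def by auto

lemma translateZ_not_extremeZ:
  assumes "k \<in> {1,2,3}" "p \<in> regionZ m" "translateZ (shiftZ m k) p \<in> extremeZ (Suc m)"
  shows "p \<in> extremeZ m"
  using assms by (cases p) (auto simp: regionZ_def extremeZ_def translateZ_def shiftZ_def)

lemma translateZ_extremeZ:
  assumes "k \<in> {1,2,3}" "p \<in> extremeZ m"
  shows "translateZ (shiftZ m k) p \<in> extremeZ (Suc m) \<union> junctionsZ m"
proof -
  from assms(1) consider "k = 1" | "k = 2" | "k = 3" by fastforce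
  then show ?thesis
    using assms(2) by cases (auto simp: junctionsZ_def extremeZ_def translateZ_def shiftZ_def)
qed

lemma subdomZ_subset_domZ_Suc: assumes k: "k \<in> {1,2,3}" shows "subdomZ m t k \<subseteq> domZ (Suc m) t"
proof
  fix p assume p: "p \<in> subdomZ m t k"
  then obtain r where r: "r \<in> domZ m t" "p = translateZ (shiftZ m k) r" unfolding subdomZ_def by auto
  have pG: "p \<in> GnZ (Suc m)" using p subdomZ_subset_pieceZ pieceZ_subset_GnZ_Suc[OF k] by blast
  show "p \<in> domZ (Suc m) t"
  proof (cases t)
    case True
    have rR: "r \<in> regionZ m" using r GnZ_subset_regionZ True unfolding domZ_def by auto
    have "r \<notin> extremeZ m" using r True unfolding domZ_def by auto
    then have "p \<notin> extremeZ (Suc m)" using translateZ_not_extremeZ[OF k rR] r by auto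
    then show ?thesis using pG True unfolding domZ_def by auto
  next
    case False then show ?thesis using pG unfolding domZ_def by auto
  qed
qed

lemma domZ_Suc_cover:
  assumes p: "p \<in> domZ (Suc m) t" "p \<notin> junctionsZ m"
  shows "\<exists>k\<in>{1,2,3}. p \<in> subdomZ m t k"
proof -
  have pG: "p \<in> GnZ (Suc m)" using p unfolding domZ_def by (auto split: if_splits)
  from GnZ_Suc_cover[OF pG] obtain k where k: "k \<in> {1,2,3}" "p \<in> pieceZ m k" by blast
  then obtain r where r: "r \<in> GnZ m" "p = translateZ (shiftZ m k) r" unfolding pieceZ_def by auto
  have "r \<in> domZ m t"
  proof (cases t)
    case True
    have "r \<notin> extremeZ m"
    proof
      assume "r \<in> extremeZ m"
      from translateZ_extremeZ[OF k(1) this] r p True show False unfolding domZ_def by auto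
    qed
    then show ?thesis using r True unfolding domZ_def by auto
  next
    case False then show ?thesis using r unfolding domZ_def by auto
  qed
  then show ?thesis using k r unfolding subdomZ_def by auto
qed

lemma adj_subdomZ_closed:
  assumes k: "k \<in> {1,2,3}" and p: "p \<in> subdomZ m t k" "p \<notin> junctionsZ m" and q: "q \<in> domZ (Suc m) t"
    and a: "adj (lattice_point p) (lattice_point q)"
  shows "q \<in> subdomZ m t k \<or> q \<in> junctionsZ m"
proof -
  have pD: "p \<in> domZ (Suc m) t" using subdomZ_subset_domZ_Suc[OF k] p by auto
  have pR: "p \<in> regionZ (Suc m)" using pD GnZ_subset_regionZ
    unfolding domZ_def by (auto split: if_splits)
  have qR: "q \<in> regionZ (Suc m)" using q GnZ_subset_regionZ
    unfolding domZ_def by (auto split: if_splits)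
  from adj_regionZ_cases[OF pR a] qR obtain c
    where c: "c \<in> cornersZ (Suc m)" "p \<in> triZ c" "q \<in> triZ c" by blast
  from triZ_Suc_subset_pieceZ[OF c(1)] obtain k' where k': "k' \<in> {1,2,3}" "triZ c \<subseteq> pieceZ m k'"
    by blast
  have "k' = k"
  proof (rule ccontr)
    assume "k' \<noteq> k"
    have "p \<in> pieceZ m k" using p subdomZ_subset_pieceZ by auto
    moreover have "p \<in> pieceZ m k'" using k' c by auto
    ultimately have "p \<in> junctionsZ m" using pieceZ_inter[OF k k'(1)] \<open>k' \<noteq> k\<close> by auto
    then show False using p by simp
  qed
  then have qP: "q \<in> pieceZ m k" using k' c by auto
  then obtain r where r: "r \<in> GnZ m" "q = translateZ (shiftZ m k) r" unfolding pieceZ_def by auto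
  show ?thesis
  proof (cases "r \<in> domZ m t")
    case True then show ?thesis using r unfolding subdomZ_def by auto
  next
    case False
    then have "t" "r \<in> extremeZ m" using r unfolding domZ_def by (auto split: if_splits)
    then have "q \<in> extremeZ (Suc m) \<union> junctionsZ m" using translateZ_extremeZ[OF k] r by auto
    then show ?thesis using q \<open>t\<close> unfolding domZ_def by auto
  qed
qed

definition junction_list :: "nat \<Rightarrow> (int \<times> int) list" where
  "junction_list m = [(2^m,0), (0,2^m), (2^m,2^m)]"

definition junction_nbhd :: "nat \<Rightarrow> (int \<times> int) list" where
  "junction_nbhd m = junction_list m @ concat (map lattice_nbrs (junction_list m))"

lemma junctionsZ_subset_junction_nbhd: "junctionsZ m \<subseteq> set (junction_nbhd m)"
  unfolding junctionsZ_def junction_nbhd_def junction_list_def by auto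

lemma lattice_adj_junction: "q \<in> junctionsZ m \<Longrightarrow> lattice_adj p q \<Longrightarrow> p \<in> set (junction_nbhd m)"
proof -
  assume q: "q \<in> junctionsZ m" and n: "lattice_adj p q"
  have "p \<in> set (lattice_nbrs q)" using lattice_adj_lattice_nbrs[OF n] .
  moreover have "q = (2^m,0) \<or> q = (0,2^m) \<or> q = (2^m,2^m)" using q unfolding junctionsZ_def by auto
  ultimately show ?thesis unfolding junction_nbhd_def junction_list_def by (elim disjE) simp_all
qed

lemma length_junction_nbhd: "length (junction_nbhd m) = 21"
  unfolding junction_nbhd_def junction_list_def lattice_nbrs_def lattice_dirs_def by simp

definition junction_nbhd_piece :: "nat \<Rightarrow> nat \<Rightarrow> (int \<times> int) list" where
  "junction_nbhd_piece m k = (let h = (2::int)^m in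
     if k = 1 then [(h,0),(0,h),(h-1,0),(h-1,1),(0,h-1),(1,h-1)]
     else if k = 2 then [(h,0),(h,h),(h+1,0),(h,1),(h,h-1),(h+1,h-1)]
     else [(0,h),(h,h),(1,h),(0,h+1),(h-1,h),(h-1,h+1)])"

lemma junction_nbhd_in_piece:
  assumes k: "k \<in> {1,2,3}" and p: "p \<in> set (junction_nbhd m)" "p \<in> piece_regionZ m k"
  shows "p \<in> set (junction_nbhd_piece m k)"
proof -
  define h :: int where "h = 2^m"
  have h: "h \<ge> 1" unfolding h_def by simp
  obtain a b where pab: "p = (a,b)" by (cases p)
  have B: "(a,b) \<in> set ([(h,0),(0,h),(h,h)] @ concat (map lattice_nbrs [(h,0),(0,h),(h,h)]))"
    using p(1) unfolding junction_nbhd_def junction_list_def h_def pab by simp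
  show ?thesis
  proof (cases "k = 1")
    case True
    have R: "0 \<le> a" "0 \<le> b" "a + b \<le> h" using p(2) True unfolding piece_regionZ_def h_def pab by auto
    have "(a,b) \<in> set [(h,0),(0,h),(h-1,0),(h-1,1),(0,h-1),(1,h-1)]"
      using B R h unfolding lattice_nbrs_def lattice_dirs_def by simp presburger
    then show ?thesis using True unfolding junction_nbhd_piece_def h_def pab by (auto simp: Let_def)
  next
    case False
    show ?thesis
    proof (cases "k = 2")
      case True
      have R: "h \<le> a" "0 \<le> b" "a + b \<le> 2 * h" using p(2) True
        unfolding piece_regionZ_def h_def pab by auto
      have "(a,b) \<in> set [(h,0),(h,h),(h+1,0),(h,1),(h,h-1),(h+1,h-1)]"
        using B R h unfolding lattice_nbrs_def lattice_dirs_def by simp presburger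
      then show ?thesis using True unfolding junction_nbhd_piece_def h_def pab by (auto simp: Let_def)
    next
      case False2: False
      then have k3: "k = 3" using k False by auto
      have R: "0 \<le> a" "h \<le> b" "a + b \<le> 2 * h" using p(2) k3
        unfolding piece_regionZ_def h_def pab by auto
      have "(a,b) \<in> set [(0,h),(h,h),(1,h),(0,h+1),(h-1,h),(h-1,h+1)]"
        using B R h unfolding lattice_nbrs_def lattice_dirs_def by simp presburger
      then show ?thesis using k3 unfolding junction_nbhd_piece_def h_def pab by (auto simp: Let_def)
    qed
  qed
qed

definition blockZ :: "nat \<Rightarrow> bool \<Rightarrow> nat \<Rightarrow> (int \<times> int) set" where
  "blockZ m t k = subdomZ m t k - set (junction_nbhd m)"

lemma card_subdomZ_diff_blockZ:
  assumes k: "k \<in> {1,2,3}"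
  shows "card (subdomZ m t k - blockZ m t k) \<le> 6"
proof -
  have "subdomZ m t k - blockZ m t k \<subseteq> set (junction_nbhd_piece m k)"
    using junction_nbhd_in_piece[OF k] subdomZ_subset_pieceZ pieceZ_subset_piece_regionZ[OF k]
    unfolding blockZ_def by blast
  then have "card (subdomZ m t k - blockZ m t k) \<le> card (set (junction_nbhd_piece m k))"
    by (intro card_mono) auto
  also have "\<dots> \<le> length (junction_nbhd_piece m k)" by (rule card_length)
  also have "\<dots> = 6" unfolding junction_nbhd_piece_def by (simp add: Let_def)
  finally show ?thesis .
qed

lemma card_domZ_Suc_diff_blockZ: "card (domZ (Suc m) t - (\<Union>k\<in>{1,2,3}. blockZ m t k)) \<le> 21"
proof -
  have "domZ (Suc m) t - (\<Union>k\<in>{1,2,3}. blockZ m t k) \<subseteq> set (junction_nbhd m)"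
  proof
    fix p assume p: "p \<in> domZ (Suc m) t - (\<Union>k\<in>{1,2,3}. blockZ m t k)"
    show "p \<in> set (junction_nbhd m)"
    proof (rule ccontr)
      assume off: "p \<notin> set (junction_nbhd m)"
      then have "p \<notin> junctionsZ m" using junctionsZ_subset_junction_nbhd by blast
      moreover have "p \<in> domZ (Suc m) t" using p by blast
      ultimately obtain k where "k \<in> {1,2,3}" "p \<in> subdomZ m t k" using domZ_Suc_cover by blast
      then show False using p off unfolding blockZ_def by blast
    qed
  qed
  then have "card (domZ (Suc m) t - (\<Union>k\<in>{1,2,3}. blockZ m t k)) \<le> card (set (junction_nbhd m))"
    by (intro card_mono) auto
  also have "\<dots> \<le> 21" using card_length[of "junction_nbhd m"] length_junction_nbhd by simp
  finally show ?thesis .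
qed

lemma blockZ_not_junction: "p \<in> blockZ m t k \<Longrightarrow> p \<notin> junctionsZ m"
  unfolding blockZ_def using junctionsZ_subset_junction_nbhd by blast

lemma blockZ_disjoint:
  assumes "i \<in> {1,2,3}" "k \<in> {1,2,3}" "i \<noteq> k"
  shows "blockZ m t i \<inter> blockZ m t k = {}"
  using pieceZ_inter[OF assms] subdomZ_subset_pieceZ[of m t i] subdomZ_subset_pieceZ[of m t k]
    blockZ_not_junction[of _ m t i] unfolding blockZ_def by blast

lemma adj_blockZ_in_subdomZ:
  assumes k: "k \<in> {1,2,3}" and p: "p \<in> blockZ m t k"
    and q: "q \<in> domZ (Suc m) t" and a: "adj (lattice_point p) (lattice_point q)"
  shows "q \<in> subdomZ m t k"
  using adj_subdomZ_closed[OF k _ blockZ_not_junction[OF p] q a] p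
    lattice_adj_junction[OF _ adj_imp_lattice_adj[OF a]] unfolding blockZ_def by blast

lemma not_adj_blockZ:
  assumes ik: "i \<in> {1,2,3}" "k \<in> {1,2,3}" "i \<noteq> k" and p: "p \<in> blockZ m t i" and q: "q \<in> blockZ m t k"
  shows "\<not> adj (lattice_point q) (lattice_point p)"
proof
  assume "adj (lattice_point q) (lattice_point p)"
  moreover have "p \<in> domZ (Suc m) t" using p subdomZ_subset_domZ_Suc[OF ik(1)]
    unfolding blockZ_def by blast
  ultimately have "p \<in> subdomZ m t k" using adj_blockZ_in_subdomZ[OF ik(2) q] by blast
  then show False
    using p pieceZ_inter[OF ik] subdomZ_subset_pieceZ[of m t i] subdomZ_subset_pieceZ[of m t k]
      blockZ_not_junction[OF p] unfolding blockZ_def by blast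
qed

text \<open>Removing the three junction points of the subtriangles and their neighbours (21 points)
  decouples the operator on \<open>G_{m+1}\<close> into three blocks; each block is the operator on a
  subtriangle with at most 6 points removed.\<close>
lemma Ncount_dom_L_Suc_decouple:
  shows "Ncount E (dom_L (Suc m) t) (Hop (dom_L (Suc m) t) b V)
           \<le> (\<Sum>k\<in>{1,2,3}. Ncount E (subdom (Suc m) t k) (Hop (subdom (Suc m) t k) b V)) + 21"
    and "(\<Sum>k\<in>{1,2,3}. Ncount E (subdom (Suc m) t k) (Hop (subdom (Suc m) t k) b V))
           \<le> Ncount E (dom_L (Suc m) t) (Hop (dom_L (Suc m) t) b V) + 18"
proof -
  let ?G = "lattice_point ` domZ (Suc m) t" and ?K = "{1,2,3::nat}"
  define A where "A k = lattice_point ` subdomZ m t k" for k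
  define C where "C k = lattice_point ` blockZ m t k" for k
  have fG: "finite ?G" and fA: "finite (A k)" for k
    using finite_domZ finite_subdomZ by (auto simp: A_def)
  have AG: "A k \<subseteq> ?G" if "k \<in> ?K" for k using subdomZ_subset_domZ_Suc[OF that] by (auto simp: A_def)
  have CA: "C k \<subseteq> A k" for k by (auto simp: A_def C_def blockZ_def)
  have CG: "C k \<subseteq> ?G" if "k \<in> ?K" for k using CA AG[OF that] by blast
  have disj: "disjoint_family_on C ?K"
    unfolding disjoint_family_on_def C_def
    by (metis blockZ_disjoint image_Int image_empty inj_lattice_point)
  have agree: "Hmat (A k) b V x y = Hmat ?G b V x y" if "k \<in> ?K" "x \<in> C k" "y \<in> C k" for k x y
    using that AG adj_blockZ_in_subdomZ by (intro Hmat_eq_if_nbrs_eq) (auto simp: A_def C_def)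
  have cross: "\<forall>x\<in>C i. \<forall>y\<in>C k. Hmat ?G b V x y = 0" if "i \<in> ?K" "k \<in> ?K" "i \<noteq> k" for i k
    using not_adj_blockZ[OF that, of _ m t] blockZ_disjoint[OF that, of m t]
    by (auto simp: C_def Hmat_def)
  have symA: "symmetric_on (A k) (Hmat (A k) b V)" for k by (rule symmetric_Hmat)
  have fK: "finite ?K" by simp
  note dec = Ncount_decouple[OF fG fK fA CA CG disj symmetric_Hmat symA agree cross]
  have card_G: "card (?G - (\<Union>k\<in>?K. C k)) \<le> 21"
    using card_domZ_Suc_diff_blockZ[of m t] unfolding C_def image_UN[symmetric]
    by (simp add: card_lattice_point_image_diff)
  have "card (A k - C k) \<le> 6" if "k \<in> ?K" for k
    using card_subdomZ_diff_blockZ[OF that, of m t] unfolding A_def C_def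
    by (simp add: card_lattice_point_image_diff)
  then have card_A: "(\<Sum>k\<in>?K. card (A k - C k)) \<le> 18"
    using sum_bounded_above[of ?K "\<lambda>k. card (A k - C k)" 6] by simp
  have sum_eq: "(\<Sum>k\<in>?K. Ncount E (subdom (Suc m) t k) (Hop (subdom (Suc m) t k) b V))
      = (\<Sum>k\<in>?K. Ncount E (A k) (matrix_op (A k) (Hmat (A k) b V)))"
    using subdom_eq_subdomZ
    by (intro sum.cong) (simp_all add: A_def Hop_eq_matrix_op[OF fA[unfolded A_def]])
  have G_eq: "Ncount E (dom_L (Suc m) t) (Hop (dom_L (Suc m) t) b V)
    = Ncount E ?G (matrix_op ?G (Hmat ?G b V))"
    by (simp add: dom_L_eq_domZ Hop_eq_matrix_op[OF fG])
  show "Ncount E (dom_L (Suc m) t) (Hop (dom_L (Suc m) t) b V)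
      \<le> (\<Sum>k\<in>?K. Ncount E (subdom (Suc m) t k) (Hop (subdom (Suc m) t k) b V)) + 21"
    using dec(1)[of E] card_G unfolding sum_eq G_eq by linarith
  show "(\<Sum>k\<in>?K. Ncount E (subdom (Suc m) t k) (Hop (subdom (Suc m) t k) b V))
      \<le> Ncount E (dom_L (Suc m) t) (Hop (dom_L (Suc m) t) b V) + 18"
    using dec(2)[of E] card_A unfolding sum_eq G_eq by linarith
qed

theorem lemma4p1:
  fixes V :: "pt \<Rightarrow> real" and L :: nat and E :: real
  assumes "L \<ge> 1"
  shows "(\<forall>t1 b1 t2 b2.
            \<bar>int (Ncount E (dom_L L t1) (Hop (dom_L L t1) b1 V))
             - int (Ncount E (dom_L L t2) (Hop (dom_L L t2) b2 V))\<bar> \<le> 9)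
       \<and> (\<forall>t b.
            \<bar>int (Ncount E (dom_L L t) (Hop (dom_L L t) b V))
             - (\<Sum>i\<in>{1,2,3::nat}. int (Ncount E (subdom L t i) (Hop (subdom L t i) b V)))\<bar> \<le> 30)"
proof (intro conjI allI)
  fix t1 b1 t2 b2
  show "\<bar>int (Ncount E (dom_L L t1) (Hop (dom_L L t1) b1 V))
         - int (Ncount E (dom_L L t2) (Hop (dom_L L t2) b2 V))\<bar> \<le> 9"
    using Ncount_dom_L_le[of E L t1 b1 V t2 b2] Ncount_dom_L_le[of E L t2 b2 V t1 b1] by linarith
next
  fix t b
  obtain m where L: "L = Suc m" using assms by (cases L) auto
  show "\<bar>int (Ncount E (dom_L L t) (Hop (dom_L L t) b V))
         - (\<Sum>i\<in>{1,2,3::nat}. int (Ncount E (subdom L t i) (Hop (subdom L t i) b V)))\<bar> \<le> 30"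
    using Ncount_dom_L_Suc_decouple[where E = E and m = m and t = t and b = b and V = V]
    unfolding L of_nat_sum[symmetric] by linarith
qed

end
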